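(* Let $\Gamma$ be a coloring and $\Omega$ a $k$-ordering of $T_{d,k}$, and let $\mathcal T$ be the initial $d$-simplex. Then $(T_{d,k},\Gamma,\Omega,\mathcal T)$ is an object of $\mathscr C_{d,k}$ and it is universal: for every object $(\widetilde Y,\widehat\gamma,\widehat\omega,\widehat{\mathfrak a}_0)$ of $\mathscr C_{d,k}$ there exists a unique morphism $(T_{d,k},\Gamma,\Omega,\mathcal T)\to(\widetilde Y,\widehat\gamma,\widehat\omega,\widehat{\mathfrak a}_0)$.
   Context: Fix $d,k\ge1$, write $[\![d]\!]=\{0,\dots,d\}$. Multicomplexes: a $d$-multicomplex is a triple $\widetilde X=(X,\mathsf m,\mathsf g)$ where $X$ is a $d$-dimensional simplicial complex on a countable vertex set, $\mathsf m:X\to\mathbb N$ equals $1$ on the empty cell and on vertices, the multicells are pairs $(\tau,r)$, $\tau\in X$, $1\le r\le\mathsf m(\tau)$ (dimension $\dim\tau$), and $\mathsf g$ assigns to each multicell $(\tau,r)$ and each codimension-one face $\sigma$ of $\tau$ a multicell $\mathsf g((\tau,r),\sigma)=(\sigma,s)$; containment $\preceq$ is the reflexive–transitive closure of "$\mathfrak b=\mathsf g(\mathfrak a,\sigma)$"; consistency is required: if $(\sigma,s),(\sigma',s')$ have equal dimension, are contained in a common multicell, and $\rho=\sigma\cap\sigma'$ has codimension one in both, then $\mathsf g((\sigma,s),\rho)=\mathsf g((\sigma',s'),\rho)$. A simplicial complex is a multicomplex with $\mathsf m\equiv1$. $\widetilde X$ is pure if every multicell lies in a $d$-multicell; two $d$-multicells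 are neighbors if they contain a common $(d-1)$-multicell; $\widetilde X$ is $d$-lower path connected if any two $d$-multicells are joined by a chain of neighbors. For a $(d-1)$-multicell $\mathfrak b$, $\delta(\mathfrak b)$ is the set of $d$-multicells containing it and $\deg\mathfrak b=|\delta(\mathfrak b)|$. A coloring is a map $\gamma$ from vertices to $[\![d]\!]$ injective on every $d$-cell, extended to cells by $\gamma(\sigma)=\{\gamma(v):v\in\sigma\}$ and to multicells via their underlying cell. A $k$-ordering $\omega$ assigns to each $(d-1)$-multicell $\mathfrak b$ a homomorphism $\omega_{\mathfrak b}:\mathbb Z/k\mathbb Z\to\mathrm{Sym}(\delta(\mathfrak b))$ whose image acts transitively. The category $\mathscr C_{d,k}$ has as objects quartets $(\widetilde X,\gamma,\omega,\mathfrak a_0)$ with $\widetilde X$ a pure, colorable, $d$-lower path connected $d$-multicomplex all of whose $(d-1)$-multicells have degree $\le k$, $\gamma$ a coloring, $\omega$ a $k$-ordering, and $\mathfrak a_0$ a $d$-multicell (root). A morphism $(\widetilde X,\gamma,\omega,\mathfrak a_0)\to(\widetilde Y,\widehat\gamma,\widehat\omega,\widehat{\mathfrak a}_0)$ is a map $\widetilde\varphi$ from multicells of $\widetilde X$ to multicells of $\widetilde Y$ lying over a simplicial map $\varphi:X\to Y$ (the multicell $\widetilde\varphi((\sigma,r))$ lies over $\varphi(\sigma)$, with $\dim$ preserved), commuting with gluing ($\widetilde\varphi(\mathsf g(\mathfrak a,\sigma))=\mathsf g'(\widetilde\varphi(\mathfrak a),\varphi(\sigma))$), with $\widetilde\varphi(\mathfrak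 a_0)=\widehat{\mathfrak a}_0$, $\widehat\gamma\circ\widetilde\varphi=\gamma$, and $\widetilde\varphi(\omega_{\mathfrak b}(l).\mathfrak a)=\widehat\omega_{\widetilde\varphi(\mathfrak b)}(l).\widetilde\varphi(\mathfrak a)$ for all $\mathfrak b$, $\mathfrak a\in\delta(\mathfrak b)$, $l\in\mathbb Z/k\mathbb Z$. The $k$-regular $d$-dimensional arboreal complex $T_{d,k}$ is the simplicial complex obtained by starting from a single $d$-simplex $\mathcal T$, attaching to each of its $(d-1)$-faces $k-1$ new $d$-simplices each using a new vertex, and inductively attaching to each $(d-1)$-face created in the previous step $k-1$ new $d$-simplices each using a new vertex; $T_{d,k}$ is the union over all steps. *)

theory Defs
  imports Main "HOL-Library.Countable_Set"
begin

text \<open>Cells are finite vertex sets; the dimension of a cell is its cardinality minus one.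
  A multicell is a pair (cell, index r) with 1 <= r <= m cell.  The gluing map g sends a
  multicell and a codimension-one face of its cell to a multicell over that face.\<close>

type_synonym 'v mcell = "'v set \<times> nat"

definition simplicial_complex :: "nat \<Rightarrow> 'v set set \<Rightarrow> bool" where
  "simplicial_complex d X \<longleftrightarrow>
     {} \<in> X \<and>
     (\<forall>\<sigma>\<in>X. finite \<sigma> \<and> card \<sigma> \<le> d + 1) \<and>
     (\<forall>\<sigma>\<in>X. \<forall>\<tau>. \<tau> \<subseteq> \<sigma> \<longrightarrow> \<tau> \<in> X) \<and>
     (\<exists>\<sigma>\<in>X. card \<sigma> = d + 1) \<and>
     countable (\<Union>X)"

definition mcells :: "'v set set \<Rightarrow> ('v set \<Rightarrow> nat) \<Rightarrow> 'v mcell set" where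
  "mcells X m = {(\<tau>, r). \<tau> \<in> X \<and> 1 \<le> r \<and> r \<le> m \<tau>}"

definition codim1 :: "'v set \<Rightarrow> 'v set \<Rightarrow> bool" where
  "codim1 \<sigma> \<tau> \<longleftrightarrow> \<sigma> \<subseteq> \<tau> \<and> card \<sigma> + 1 = card \<tau>"

definition contain_step ::
  "'v set set \<Rightarrow> ('v set \<Rightarrow> nat) \<Rightarrow> ('v mcell \<Rightarrow> 'v set \<Rightarrow> 'v mcell) \<Rightarrow> 'v mcell rel" where
  "contain_step X m g = {(b, a). a \<in> mcells X m \<and> (\<exists>\<sigma>. codim1 \<sigma> (fst a) \<and> b = g a \<sigma>)}"

text \<open>(b, a) \<in> contained X m g  means  b \<preceq> a  (b is contained in a).\<close>
definition contained ::
  "'v set set \<Rightarrow> ('v set \<Rightarrow> nat) \<Rightarrow> ('v mcell \<Rightarrow> 'v set \<Rightarrow> 'v mcell) \<Rightarrow> 'v mcell rel" where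
  "contained X m g = (contain_step X m g)\<^sup>*"

definition multicomplex ::
  "nat \<Rightarrow> 'v set set \<Rightarrow> ('v set \<Rightarrow> nat) \<Rightarrow> ('v mcell \<Rightarrow> 'v set \<Rightarrow> 'v mcell) \<Rightarrow> bool" where
  "multicomplex d X m g \<longleftrightarrow>
     simplicial_complex d X \<and>
     (\<forall>\<tau>\<in>X. 1 \<le> m \<tau>) \<and>
     m {} = 1 \<and> (\<forall>v\<in>\<Union>X. m {v} = 1) \<and>
     (\<forall>a\<in>mcells X m. \<forall>\<sigma>. codim1 \<sigma> (fst a) \<longrightarrow>
         g a \<sigma> \<in> mcells X m \<and> fst (g a \<sigma>) = \<sigma>) \<and>
     (\<forall>a\<in>mcells X m. \<forall>b\<in>mcells X m. \<forall>c\<in>mcells X m.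
         card (fst a) = card (fst b) \<and> (a, c) \<in> contained X m g \<and> (b, c) \<in> contained X m g \<and>
         codim1 (fst a \<inter> fst b) (fst a) \<and> codim1 (fst a \<inter> fst b) (fst b)
         \<longrightarrow> g a (fst a \<inter> fst b) = g b (fst a \<inter> fst b))"

definition dcells :: "nat \<Rightarrow> 'v set set \<Rightarrow> ('v set \<Rightarrow> nat) \<Rightarrow> 'v mcell set" where
  "dcells n X m = {a \<in> mcells X m. card (fst a) = n + 1}"

definition pure ::
  "nat \<Rightarrow> 'v set set \<Rightarrow> ('v set \<Rightarrow> nat) \<Rightarrow> ('v mcell \<Rightarrow> 'v set \<Rightarrow> 'v mcell) \<Rightarrow> bool" where
  "pure d X m g \<longleftrightarrow> (\<forall>a\<in>mcells X m. \<exists>c\<in>dcells d X m. (a, c) \<in> contained X m g)"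

definition neighbors ::
  "nat \<Rightarrow> 'v set set \<Rightarrow> ('v set \<Rightarrow> nat) \<Rightarrow> ('v mcell \<Rightarrow> 'v set \<Rightarrow> 'v mcell) \<Rightarrow> 'v mcell rel" where
  "neighbors d X m g = {(a, b). a \<in> dcells d X m \<and> b \<in> dcells d X m \<and>
      (\<exists>c. card (fst c) = d \<and> (c, a) \<in> contained X m g \<and> (c, b) \<in> contained X m g)}"

definition lower_path_connected ::
  "nat \<Rightarrow> 'v set set \<Rightarrow> ('v set \<Rightarrow> nat) \<Rightarrow> ('v mcell \<Rightarrow> 'v set \<Rightarrow> 'v mcell) \<Rightarrow> bool" where
  "lower_path_connected d X m g \<longleftrightarrow>
     (\<forall>a\<in>dcells d X m. \<forall>b\<in>dcells d X m. (a, b) \<in> (neighbors d X m g)\<^sup>*)"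

definition coface ::
  "nat \<Rightarrow> 'v set set \<Rightarrow> ('v set \<Rightarrow> nat) \<Rightarrow> ('v mcell \<Rightarrow> 'v set \<Rightarrow> 'v mcell) \<Rightarrow> 'v mcell \<Rightarrow> 'v mcell set" where
  "coface d X m g b = {a \<in> dcells d X m. (b, a) \<in> contained X m g}"

definition coloring :: "nat \<Rightarrow> 'v set set \<Rightarrow> ('v \<Rightarrow> nat) \<Rightarrow> bool" where
  "coloring d X \<gamma> \<longleftrightarrow> (\<forall>v\<in>\<Union>X. \<gamma> v \<le> d) \<and> (\<forall>\<sigma>\<in>X. card \<sigma> = d + 1 \<longrightarrow> inj_on \<gamma> \<sigma>)"

text \<open>A k-ordering: for every (d-1)-multicell b, a homomorphism from Z/kZ (modelled as
  {0..<k} with addition mod k) into Sym(delta(b)) with transitive image.\<close>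
definition k_ordering ::
  "nat \<Rightarrow> nat \<Rightarrow> 'v set set \<Rightarrow> ('v set \<Rightarrow> nat) \<Rightarrow> ('v mcell \<Rightarrow> 'v set \<Rightarrow> 'v mcell)
     \<Rightarrow> ('v mcell \<Rightarrow> nat \<Rightarrow> 'v mcell \<Rightarrow> 'v mcell) \<Rightarrow> bool" where
  "k_ordering d k X m g \<omega> \<longleftrightarrow>
     (\<forall>b\<in>dcells (d - 1) X m.
        (\<forall>l<k. bij_betw (\<omega> b l) (coface d X m g b) (coface d X m g b)) \<and>
        (\<forall>l<k. \<forall>l'<k. \<forall>a\<in>coface d X m g b.
            \<omega> b ((l + l') mod k) a = \<omega> b l (\<omega> b l' a)) \<and>
        (\<forall>a\<in>coface d X m g b. \<forall>a'\<in>coface d X m g b. \<exists>l<k. \<omega> b l a = a'))"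

definition is_object ::
  "nat \<Rightarrow> nat \<Rightarrow> 'v set set \<Rightarrow> ('v set \<Rightarrow> nat) \<Rightarrow> ('v mcell \<Rightarrow> 'v set \<Rightarrow> 'v mcell)
     \<Rightarrow> ('v \<Rightarrow> nat) \<Rightarrow> ('v mcell \<Rightarrow> nat \<Rightarrow> 'v mcell \<Rightarrow> 'v mcell) \<Rightarrow> 'v mcell \<Rightarrow> bool" where
  "is_object d k X m g \<gamma> \<omega> a0 \<longleftrightarrow>
     multicomplex d X m g \<and> pure d X m g \<and> (\<exists>\<gamma>'. coloring d X \<gamma>') \<and>
     lower_path_connected d X m g \<and>
     (\<forall>b\<in>dcells (d - 1) X m. finite (coface d X m g b) \<and> card (coface d X m g b) \<le> k) \<and>
     coloring d X \<gamma> \<and> k_ordering d k X m g \<omega> \<and> a0 \<in> dcells d X m"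

definition is_morphism ::
  "nat \<Rightarrow> nat \<Rightarrow> 'v set set \<Rightarrow> ('v set \<Rightarrow> nat) \<Rightarrow> ('v mcell \<Rightarrow> 'v set \<Rightarrow> 'v mcell)
     \<Rightarrow> ('v \<Rightarrow> nat) \<Rightarrow> ('v mcell \<Rightarrow> nat \<Rightarrow> 'v mcell \<Rightarrow> 'v mcell) \<Rightarrow> 'v mcell
     \<Rightarrow> 'w set set \<Rightarrow> ('w set \<Rightarrow> nat) \<Rightarrow> ('w mcell \<Rightarrow> 'w set \<Rightarrow> 'w mcell)
     \<Rightarrow> ('w \<Rightarrow> nat) \<Rightarrow> ('w mcell \<Rightarrow> nat \<Rightarrow> 'w mcell \<Rightarrow> 'w mcell) \<Rightarrow> 'w mcell
     \<Rightarrow> ('v mcell \<Rightarrow> 'w mcell) \<Rightarrow> bool" where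
  "is_morphism d k X m g \<gamma> \<omega> a0 Y m' g' \<gamma>' \<omega>' b0 F \<longleftrightarrow>
     (\<exists>\<phi> :: 'v \<Rightarrow> 'w.
        (\<forall>\<sigma>\<in>X. \<phi> ` \<sigma> \<in> Y) \<and>
        (\<forall>a\<in>mcells X m. F a \<in> mcells Y m' \<and> fst (F a) = \<phi> ` fst a \<and>
                          card (fst (F a)) = card (fst a)) \<and>
        (\<forall>a\<in>mcells X m. \<forall>\<sigma>. codim1 \<sigma> (fst a) \<longrightarrow> F (g a \<sigma>) = g' (F a) (\<phi> ` \<sigma>))) \<and>
     F a0 = b0 \<and>
     (\<forall>a\<in>mcells X m. \<gamma>' ` fst (F a) = \<gamma> ` fst a) \<and>
     (\<forall>b\<in>dcells (d - 1) X m. \<forall>a\<in>coface d X m g b. \<forall>l<k.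
         F (\<omega> b l a) = \<omega>' (F b) l (F a))"

text \<open>A non-initial simplex is reached by a (reversed) path x_t # ... # x_1 with x_s = (i_s, j_s),
  i_s <= d (the colour of the removed vertex = colour of the new vertex),
  1 <= j_s <= k-1 (which of the k-1 new simplices), and i_{s+1} \<noteq> i_s (the face used at
  step s+1 must be one created at step s, i.e. must contain the newest vertex).
  The new vertex created by that step is the list x_t # ... # x_1 itself; the colour of a
  vertex is the first component of its head.\<close>

fun arb_path :: "nat \<Rightarrow> nat \<Rightarrow> (nat \<times> nat) list \<Rightarrow> bool" where
  "arb_path d k [] = True"
| "arb_path d k [x] = (fst x \<le> d \<and> 1 \<le> snd x \<and> snd x \<le> k - 1)"
| "arb_path d k (x # y # q) =
     (fst x \<le> d \<and> 1 \<le> snd x \<and> snd x \<le> k - 1 \<and> fst x \<noteq> fst y \<and> arb_path d k (y # q))"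

fun arb_simplex :: "nat \<Rightarrow> (nat \<times> nat) list \<Rightarrow> (nat \<times> nat) list set" where
  "arb_simplex d [] = {[(i, 0)] | i. i \<le> d}"
| "arb_simplex d (x # q) = {v \<in> arb_simplex d q. fst (hd v) \<noteq> fst x} \<union> {x # q}"

definition arboreal :: "nat \<Rightarrow> nat \<Rightarrow> (nat \<times> nat) list set set" where
  "arboreal d k = {\<tau>. \<exists>p. arb_path d k p \<and> \<tau> \<subseteq> arb_simplex d p}"

definition arb_m :: "(nat \<times> nat) list set \<Rightarrow> nat" where
  "arb_m \<tau> = 1"

definition arb_g :: "(nat \<times> nat) list mcell \<Rightarrow> (nat \<times> nat) list set \<Rightarrow> (nat \<times> nat) list mcell" where
  "arb_g a \<sigma> = (\<sigma>, 1)"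

definition arb_root :: "nat \<Rightarrow> (nat \<times> nat) list mcell" where
  "arb_root d = (arb_simplex d [], 1)"

end

theory Submission
  imports Defs
begin

text \<open>
  Every d-simplex of the arboreal complex is reached from the initial simplex by a unique path of
  steps across facets, and each step is produced by an element of the k-ordering at the facet
  crossed.  A morphism must send the initial simplex to the root and, commuting with gluing,
  colourings and orderings, must send the simplex reached by a step to the image of the previous
  image under the same element of the target ordering, taken at the facet with the same colours.
  This recursion defines the images of all d-simplices; vertices are matched by colour, and a cell
  goes to the unique face with the image vertices below the image of any simplex containing it,
  which is well defined because consecutive images share the crossed facet.  Any morphism obeys
  the same recursion, whence uniqueness.  That the arboreal complex is an object is combinatorics:
  its ridges are the facets of its simplices, each with exactly k cofaces.
\<close>

section \<open>Multicomplexes\<close>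

lemma codim1_DiffE:
  assumes "codim1 \<sigma> \<tau>" "finite \<tau>"
  obtains x where "x \<in> \<tau>" "\<sigma> = \<tau> - {x}"
proof -
  have "finite \<sigma>" using assms unfolding codim1_def using finite_subset by blast
  then have "card (\<tau> - \<sigma>) = card \<tau> - card \<sigma>" using assms unfolding codim1_def
    by (simp add: card_Diff_subset)
  moreover have "card \<sigma> + 1 = card \<tau>" using assms(1) unfolding codim1_def by blast
  ultimately have "card (\<tau> - \<sigma>) = 1" by linarith
  then obtain x where "\<tau> - \<sigma> = {x}" by (rule card_1_singletonE)
  then show ?thesis using that assms(1) unfolding codim1_def by blast
qed

lemma codim1_Diff_singleton:
  assumes "finite \<tau>" "x \<in> \<tau>"
  shows "codim1 (\<tau> - {x}) \<tau>"
proof -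
  have "card \<tau> > 0" using assms card_gt_0_iff by blast
  then show ?thesis using assms unfolding codim1_def by (simp add: card_Diff_singleton)
qed

lemma codim1_Int_codim1:
  assumes "codim1 \<sigma>\<^sub>1 \<tau>" "codim1 \<sigma>\<^sub>2 \<tau>" "\<sigma>\<^sub>1 \<noteq> \<sigma>\<^sub>2" "finite \<tau>"
  shows "codim1 (\<sigma>\<^sub>1 \<inter> \<sigma>\<^sub>2) \<sigma>\<^sub>1"
proof -
  obtain x\<^sub>1 where x\<^sub>1: "x\<^sub>1 \<in> \<tau>" "\<sigma>\<^sub>1 = \<tau> - {x\<^sub>1}" using codim1_DiffE[OF assms(1,4)] .
  obtain x\<^sub>2 where x\<^sub>2: "x\<^sub>2 \<in> \<tau>" "\<sigma>\<^sub>2 = \<tau> - {x\<^sub>2}" using codim1_DiffE[OF assms(2,4)] .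
  have "\<sigma>\<^sub>1 \<inter> \<sigma>\<^sub>2 = \<sigma>\<^sub>1 - {x\<^sub>2}" "x\<^sub>2 \<in> \<sigma>\<^sub>1" using x\<^sub>1 x\<^sub>2 assms(3) by auto
  moreover have "finite \<sigma>\<^sub>1" using x\<^sub>1(2) assms(4) by simp
  ultimately show ?thesis using codim1_Diff_singleton by metis
qed

definition mface ::
  "'v set set \<Rightarrow> ('v set \<Rightarrow> nat) \<Rightarrow> ('v mcell \<Rightarrow> 'v set \<Rightarrow> 'v mcell) \<Rightarrow> 'v mcell \<Rightarrow> 'v set \<Rightarrow> 'v mcell" where
  "mface X m g a \<sigma> = (THE c. (c, a) \<in> contained X m g \<and> fst c = \<sigma>)"

lemma contained_glue: "a \<in> mcells X m \<Longrightarrow> codim1 \<sigma> (fst a) \<Longrightarrow> (g a \<sigma>, a) \<in> contained X m g"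
  unfolding contained_def contain_step_def by blast

lemma contained_trans:
  "(a, b) \<in> contained X m g \<Longrightarrow> (b, c) \<in> contained X m g \<Longrightarrow> (a, c) \<in> contained X m g"
  unfolding contained_def by simp

lemma contained_last_step:
  "(c, a) \<in> contained X m g \<Longrightarrow>
     c = a \<or> (\<exists>\<sigma>. codim1 \<sigma> (fst a) \<and> a \<in> mcells X m \<and> (c, g a \<sigma>) \<in> contained X m g)"
  unfolding contained_def contain_step_def by (erule rtranclE) blast+

context
  fixes d X m g
  assumes mc: "multicomplex d X m g"
begin

lemma multicomplex_glue:
  "a \<in> mcells X m \<Longrightarrow> codim1 \<sigma> (fst a) \<Longrightarrow> g a \<sigma> \<in> mcells X m \<and> fst (g a \<sigma>) = \<sigma>"
  using mc unfolding multicomplex_def by blast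

lemma multicomplex_simplicial_complex: "simplicial_complex d X"
  using mc unfolding multicomplex_def by (rule conjunct1)

lemma multicomplex_consistent:
  "\<forall>a\<in>mcells X m. \<forall>b\<in>mcells X m. \<forall>c\<in>mcells X m.
     card (fst a) = card (fst b) \<and> (a, c) \<in> contained X m g \<and> (b, c) \<in> contained X m g \<and>
     codim1 (fst a \<inter> fst b) (fst a) \<and> codim1 (fst a \<inter> fst b) (fst b)
     \<longrightarrow> g a (fst a \<inter> fst b) = g b (fst a \<inter> fst b)"
  using mc unfolding multicomplex_def by (elim conjE) assumption

lemma multicomplex_subset_closed: "\<sigma> \<in> X \<Longrightarrow> \<tau> \<subseteq> \<sigma> \<Longrightarrow> \<tau> \<in> X"
  using multicomplex_simplicial_complex unfolding simplicial_complex_def by (elim conjE) blast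

lemma mcell_finite: "a \<in> mcells X m \<Longrightarrow> finite (fst a)"
proof -
  have "\<forall>\<sigma>\<in>X. finite \<sigma> \<and> card \<sigma> \<le> d + 1"
    using multicomplex_simplicial_complex unfolding simplicial_complex_def by (elim conjE) assumption
  then show "a \<in> mcells X m \<Longrightarrow> finite (fst a)" unfolding mcells_def by auto
qed

lemma contained_mcell_subset:
  "(c, a) \<in> contained X m g \<Longrightarrow> a \<in> mcells X m \<Longrightarrow> c \<in> mcells X m \<and> fst c \<subseteq> fst a"
  unfolding contained_def
proof (induction rule: rtrancl_induct)
  case (step y z)
  then obtain \<sigma> where "codim1 \<sigma> (fst z)" "y = g z \<sigma>" unfolding contain_step_def by blast
  with step multicomplex_glue[of z \<sigma>] show ?case unfolding codim1_def by blast
qed simp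

lemma contained_same_cell_eq:
  assumes "(c, a) \<in> contained X m g" "a \<in> mcells X m" "fst c = fst a"
  shows "c = a"
proof (rule ccontr)
  assume "c \<noteq> a"
  then obtain \<sigma> where \<sigma>: "codim1 \<sigma> (fst a)" "(c, g a \<sigma>) \<in> contained X m g"
    using contained_last_step[OF assms(1)] by blast
  then have "fst a \<subseteq> \<sigma>"
    using multicomplex_glue[OF assms(2) \<sigma>(1)] contained_mcell_subset[OF \<sigma>(2)] assms(3) by auto
  moreover have "finite \<sigma>" using \<sigma>(1) mcell_finite[OF assms(2)] unfolding codim1_def by (blast intro: finite_subset)
  ultimately have "card (fst a) \<le> card \<sigma>" by (rule card_mono[rotated])
  then show False using \<sigma>(1) unfolding codim1_def by simp
qed

lemma contained_face_exists:
  "a \<in> mcells X m \<Longrightarrow> \<sigma> \<subseteq> fst a \<Longrightarrow> \<exists>c. (c, a) \<in> contained X m g \<and> fst c = \<sigma>"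
proof (induction "card (fst a - \<sigma>)" arbitrary: a rule: less_induct)
  case less
  show ?case
  proof (cases "\<sigma> = fst a")
    case True then show ?thesis unfolding contained_def by blast
  next
    case False
    then obtain x where x: "x \<in> fst a" "x \<notin> \<sigma>" using less by blast
    have fin: "finite (fst a)" using mcell_finite less by blast
    note cd = codim1_Diff_singleton[OF fin x(1)]
    let ?b = "g a (fst a - {x})"
    have b: "?b \<in> mcells X m" "fst ?b = fst a - {x}" using multicomplex_glue[OF less(2) cd] by auto
    have "fst ?b - \<sigma> = (fst a - \<sigma>) - {x}" using b(2) by blast
    then have "card (fst ?b - \<sigma>) < card (fst a - \<sigma>)"
      using card_Diff1_less[of "fst a - \<sigma>" x] x fin by simp
    then obtain c where "(c, ?b) \<in> contained X m g" "fst c = \<sigma>"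
      using less(1)[OF _ b(1)] b(2) less(3) x by blast
    then show ?thesis using contained_trans contained_glue[OF less(2) cd] by blast
  qed
qed

text \<open>Two distinct facets of a multicell have their common faces in common: this is where the
  consistency axiom of multicomplexes enters.\<close>
lemma glue_facets_common_face:
  assumes a: "a \<in> mcells X m" and \<sigma>: "codim1 \<sigma>\<^sub>1 (fst a)" "codim1 \<sigma>\<^sub>2 (fst a)" "\<sigma>\<^sub>1 \<noteq> \<sigma>\<^sub>2"
    and \<rho>: "\<rho> \<subseteq> \<sigma>\<^sub>1 \<inter> \<sigma>\<^sub>2"
  obtains e where "(e, g a \<sigma>\<^sub>1) \<in> contained X m g" "(e, g a \<sigma>\<^sub>2) \<in> contained X m g" "fst e = \<rho>"
proof -
  define y\<^sub>1 y\<^sub>2 where "y\<^sub>1 = g a \<sigma>\<^sub>1" and "y\<^sub>2 = g a \<sigma>\<^sub>2"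
  have y: "y\<^sub>1 \<in> mcells X m" "fst y\<^sub>1 = \<sigma>\<^sub>1" "y\<^sub>2 \<in> mcells X m" "fst y\<^sub>2 = \<sigma>\<^sub>2"
    using multicomplex_glue[OF a] \<sigma> y\<^sub>1_def y\<^sub>2_def by auto
  have fin: "finite (fst a)" using mcell_finite[OF a] .
  have cd: "codim1 (\<sigma>\<^sub>1 \<inter> \<sigma>\<^sub>2) \<sigma>\<^sub>1" "codim1 (\<sigma>\<^sub>1 \<inter> \<sigma>\<^sub>2) \<sigma>\<^sub>2"
    using codim1_Int_codim1[OF \<sigma> fin] codim1_Int_codim1[OF \<sigma>(2,1) \<sigma>(3)[symmetric] fin]
    by (simp_all add: Int_commute)
  have "card \<sigma>\<^sub>1 = card \<sigma>\<^sub>2" using \<sigma>(1,2) unfolding codim1_def by simp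
  then have glue_eq: "g y\<^sub>1 (\<sigma>\<^sub>1 \<inter> \<sigma>\<^sub>2) = g y\<^sub>2 (\<sigma>\<^sub>1 \<inter> \<sigma>\<^sub>2)"
    using multicomplex_consistent[rule_format, OF y(1) y(3) a] contained_glue[OF a \<sigma>(1)]
      contained_glue[OF a \<sigma>(2)] cd y(2,4) unfolding y\<^sub>1_def y\<^sub>2_def by simp
  let ?z = "g y\<^sub>1 (\<sigma>\<^sub>1 \<inter> \<sigma>\<^sub>2)"
  have "(?z, g a \<sigma>\<^sub>1) \<in> contained X m g"
    using contained_glue[OF y(1)] cd(1) y(2) unfolding y\<^sub>1_def by simp
  moreover have "(?z, g a \<sigma>\<^sub>2) \<in> contained X m g"
    using contained_glue[OF y(3)] cd(2) y(4) glue_eq unfolding y\<^sub>1_def y\<^sub>2_def by simp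
  ultimately have z: "(?z, g a \<sigma>\<^sub>1) \<in> contained X m g" "(?z, g a \<sigma>\<^sub>2) \<in> contained X m g" .
  have "?z \<in> mcells X m" "fst ?z = \<sigma>\<^sub>1 \<inter> \<sigma>\<^sub>2"
    using multicomplex_glue[OF y(1)] cd(1) unfolding y(2) by auto
  then have "?z \<in> mcells X m" "\<rho> \<subseteq> fst ?z" using \<rho> by simp_all
  then obtain e where e: "(e, ?z) \<in> contained X m g" "fst e = \<rho>" using contained_face_exists by blast
  show ?thesis using that[OF contained_trans[OF e(1) z(1)] contained_trans[OF e(1) z(2)] e(2)] .
qed

lemma contained_face_unique:
  "a \<in> mcells X m \<Longrightarrow> (c\<^sub>1, a) \<in> contained X m g \<Longrightarrow> (c\<^sub>2, a) \<in> contained X m g \<Longrightarrow>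
     fst c\<^sub>1 = fst c\<^sub>2 \<Longrightarrow> c\<^sub>1 = c\<^sub>2"
proof (induction "card (fst a)" arbitrary: a c\<^sub>1 c\<^sub>2 rule: less_induct)
  case less
  note a = less.prems(1)
  have IH: "c = c'" if "codim1 \<sigma> (fst a)" "(c, g a \<sigma>) \<in> contained X m g"
    "(c', g a \<sigma>) \<in> contained X m g" "fst c = fst c'" for \<sigma> c c'
  proof -
    have "g a \<sigma> \<in> mcells X m" "fst (g a \<sigma>) = \<sigma>" using multicomplex_glue[OF a that(1)] by auto
    moreover have "card \<sigma> < card (fst a)" using that(1) unfolding codim1_def by simp
    ultimately show ?thesis using less.hyps[OF _ _ that(2-4)] by simp
  qed
  show ?case
  proof (cases "c\<^sub>1 = a \<or> c\<^sub>2 = a")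
    case True
    then show ?thesis
      using contained_same_cell_eq[OF less.prems(2,1)] contained_same_cell_eq[OF less.prems(3,1)]
        less.prems(4) by auto
  next
    case False
    then have "c\<^sub>1 \<noteq> a" "c\<^sub>2 \<noteq> a" by simp_all
    then obtain \<sigma>\<^sub>1 \<sigma>\<^sub>2 where
      \<sigma>: "codim1 \<sigma>\<^sub>1 (fst a)" "(c\<^sub>1, g a \<sigma>\<^sub>1) \<in> contained X m g"
         "codim1 \<sigma>\<^sub>2 (fst a)" "(c\<^sub>2, g a \<sigma>\<^sub>2) \<in> contained X m g"
      using contained_last_step[OF less.prems(2)] contained_last_step[OF less.prems(3)] by auto
    show ?thesis
    proof (cases "\<sigma>\<^sub>1 = \<sigma>\<^sub>2")
      case True
      then show ?thesis using IH[OF \<sigma>(1,2)] \<sigma>(4) less.prems(4) by simp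
    next
      case False
      have y: "g a \<sigma>\<^sub>1 \<in> mcells X m" "fst (g a \<sigma>\<^sub>1) = \<sigma>\<^sub>1"
          "g a \<sigma>\<^sub>2 \<in> mcells X m" "fst (g a \<sigma>\<^sub>2) = \<sigma>\<^sub>2"
        using multicomplex_glue[OF a \<sigma>(1)] multicomplex_glue[OF a \<sigma>(3)] by auto
      have "fst c\<^sub>1 \<subseteq> \<sigma>\<^sub>1" "fst c\<^sub>2 \<subseteq> \<sigma>\<^sub>2"
        using contained_mcell_subset[OF \<sigma>(2) y(1)] contained_mcell_subset[OF \<sigma>(4) y(3)] y(2,4)
        by simp_all
      then have "fst c\<^sub>1 \<subseteq> \<sigma>\<^sub>1 \<inter> \<sigma>\<^sub>2" using less.prems(4) by simp
      then obtain e where e: "(e, g a \<sigma>\<^sub>1) \<in> contained X m g" "(e, g a \<sigma>\<^sub>2) \<in> contained X m g"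
        "fst e = fst c\<^sub>1"
        by (rule glue_facets_common_face[OF a \<sigma>(1,3) False])
      have "fst c\<^sub>2 = fst e" using e(3) less.prems(4) by simp
      then show ?thesis using IH[OF \<sigma>(1,2) e(1) e(3)[symmetric]] IH[OF \<sigma>(3,4) e(2)] by simp
    qed
  qed
qed

lemma mface:
  assumes "a \<in> mcells X m" "\<sigma> \<subseteq> fst a"
  shows "(mface X m g a \<sigma>, a) \<in> contained X m g \<and> fst (mface X m g a \<sigma>) = \<sigma> \<and> mface X m g a \<sigma> \<in> mcells X m"
proof -
  obtain c where c: "(c, a) \<in> contained X m g" "fst c = \<sigma>"
    using contained_face_exists[OF assms] by blast
  have "\<exists>!c. (c, a) \<in> contained X m g \<and> fst c = \<sigma>"
  proof (rule ex1I[of _ c])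
    show "(c, a) \<in> contained X m g \<and> fst c = \<sigma>" using c by simp
    show "c' = c" if "(c', a) \<in> contained X m g \<and> fst c' = \<sigma>" for c'
      using contained_face_unique[OF assms(1) _ c(1)] that c(2) by simp
  qed
  then have "(mface X m g a \<sigma>, a) \<in> contained X m g \<and> fst (mface X m g a \<sigma>) = \<sigma>"
    unfolding mface_def by (rule theI')
  then show ?thesis using contained_mcell_subset[OF _ assms(1)] by simp
qed

lemma mface_eqI:
  assumes "a \<in> mcells X m" "(c, a) \<in> contained X m g" "fst c = \<sigma>"
  shows "mface X m g a \<sigma> = c"
proof -
  have "\<sigma> \<subseteq> fst a" using contained_mcell_subset[OF assms(2,1)] assms(3) by simp
  then have "(mface X m g a \<sigma>, a) \<in> contained X m g" "fst (mface X m g a \<sigma>) = \<sigma>"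
    using mface[OF assms(1)] by auto
  then show ?thesis using contained_face_unique[OF assms(1) _ assms(2)] assms(3) by simp
qed

lemma mface_contained:
  assumes a: "a \<in> mcells X m"
    and c: "(c, a) \<in> contained X m g" and \<sigma>: "\<sigma> \<subseteq> fst c"
  shows "mface X m g a \<sigma> = mface X m g c \<sigma>"
proof -
  have "c \<in> mcells X m" using contained_mcell_subset[OF c a] by simp
  then have "(mface X m g c \<sigma>, c) \<in> contained X m g" "fst (mface X m g c \<sigma>) = \<sigma>"
    using mface[OF _ \<sigma>] by auto
  then show ?thesis using mface_eqI[OF a] contained_trans[OF _ c] by simp
qed

end

section \<open>Morphisms, colourings and orderings\<close>

lemma is_morphism_contained:
  assumes X: "multicomplex d X m g"
    and F: "is_morphism d k X m g \<gamma> \<omega> a\<^sub>0 Y m' g' \<gamma>' \<omega>' b\<^sub>0 F"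
    and ca: "(c, a) \<in> contained X m g"
  shows "(F c, F a) \<in> contained Y m' g'"
proof -
  obtain \<phi> where
    cells: "\<forall>a\<in>mcells X m. F a \<in> mcells Y m' \<and> fst (F a) = \<phi> ` fst a \<and> card (fst (F a)) = card (fst a)"
    and glue: "\<forall>a\<in>mcells X m. \<forall>\<sigma>. codim1 \<sigma> (fst a) \<longrightarrow> F (g a \<sigma>) = g' (F a) (\<phi> ` \<sigma>)"
    using F unfolding is_morphism_def by (elim conjE exE) (simp only:)
  show ?thesis
    using ca unfolding contained_def
  proof (induction rule: rtrancl_induct)
    case (step y z)
    then obtain \<sigma> where z: "z \<in> mcells X m" "codim1 \<sigma> (fst z)" "y = g z \<sigma>"
      unfolding contain_step_def by blast
    have "g z \<sigma> \<in> mcells X m" "fst (g z \<sigma>) = \<sigma>" using multicomplex_glue[OF X z(1,2)] by auto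
    then have "card (\<phi> ` \<sigma>) = card \<sigma>" using cells by metis
    moreover have "\<phi> ` \<sigma> \<subseteq> \<phi> ` fst z" using z(2) unfolding codim1_def by blast
    ultimately have "codim1 (\<phi> ` \<sigma>) (fst (F z))" using z(1,2) cells unfolding codim1_def by auto
    then have "(g' (F z) (\<phi> ` \<sigma>), F z) \<in> contained Y m' g'" using contained_glue cells z(1) by blast
    then have "(F y, F z) \<in> contained Y m' g'" using glue z by simp
    then show ?case using step.IH unfolding contained_def by simp
  qed simp
qed

context
  fixes d k X m g \<gamma> \<omega> a\<^sub>0 Y m' g' \<gamma>' \<omega>' b\<^sub>0 F
  assumes F: "is_morphism d k X m g \<gamma> \<omega> a\<^sub>0 Y m' g' \<gamma>' \<omega>' b\<^sub>0 F"
begin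

lemma is_morphism_root: "F a\<^sub>0 = b\<^sub>0"
  using F unfolding is_morphism_def by (elim conjE) assumption

lemma is_morphism_colour:
  assumes "a \<in> mcells X m"
  shows "\<gamma>' ` fst (F a) = \<gamma> ` fst a"
proof -
  have "\<forall>a\<in>mcells X m. \<gamma>' ` fst (F a) = \<gamma> ` fst a"
    using F unfolding is_morphism_def by (elim conjE) assumption
  then show ?thesis using assms by blast
qed

lemma is_morphism_ordering:
  assumes "b \<in> dcells (d - 1) X m" "a \<in> coface d X m g b" "l < k"
  shows "F (\<omega> b l a) = \<omega>' (F b) l (F a)"
proof -
  have "\<forall>b\<in>dcells (d - 1) X m. \<forall>a\<in>coface d X m g b. \<forall>l<k. F (\<omega> b l a) = \<omega>' (F b) l (F a)"
    using F unfolding is_morphism_def by (elim conjE) assumption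
  then show ?thesis using assms by blast
qed

end

lemma coloring_top_cell:
  assumes "coloring d X \<gamma>" "\<tau> \<in> X" "card \<tau> = d + 1"
  shows "\<gamma> ` \<tau> = {..d} \<and> inj_on \<gamma> \<tau>"
proof -
  have inj: "inj_on \<gamma> \<tau>" and sub: "\<gamma> ` \<tau> \<subseteq> {..d}" using assms unfolding coloring_def by blast+
  then have "card (\<gamma> ` \<tau>) = card {..d}" using card_image[OF inj] assms(3) by simp
  then show ?thesis using card_subset_eq[OF _ sub] inj by simp
qed

context
  fixes d k X m g \<omega> b
  assumes ord: "k_ordering d k X m g \<omega>" and k_pos: "1 \<le> k" and b: "b \<in> dcells (d - 1) X m"
begin

lemma k_ordering_in: "a \<in> coface d X m g b \<Longrightarrow> l < k \<Longrightarrow> \<omega> b l a \<in> coface d X m g b"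
  using ord b unfolding k_ordering_def bij_betw_def by blast

lemma k_ordering_add:
  "a \<in> coface d X m g b \<Longrightarrow> l < k \<Longrightarrow> l' < k \<Longrightarrow> \<omega> b ((l + l') mod k) a = \<omega> b l (\<omega> b l' a)"
  using ord b unfolding k_ordering_def by blast

lemma k_ordering_transitive:
  "a \<in> coface d X m g b \<Longrightarrow> a' \<in> coface d X m g b \<Longrightarrow> \<exists>l<k. \<omega> b l a = a'"
  using ord b unfolding k_ordering_def by blast

lemma k_ordering_zero: "a \<in> coface d X m g b \<Longrightarrow> \<omega> b 0 a = a"
proof -
  assume a: "a \<in> coface d X m g b"
  have k0: "0 < k" using k_pos by simp
  have "inj_on (\<omega> b 0) (coface d X m g b)"
    using ord b k0 unfolding k_ordering_def bij_betw_def by blast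
  moreover have "\<omega> b 0 (\<omega> b 0 a) = \<omega> b 0 a" using k_ordering_add[OF a k0 k0] by simp
  ultimately show ?thesis using inj_onD a k_ordering_in[OF a k0] by metis
qed

lemma k_ordering_coface_card: "finite (coface d X m g b) \<and> card (coface d X m g b) \<le> k"
proof (cases "coface d X m g b = {}")
  case False
  then obtain a where a: "a \<in> coface d X m g b" by blast
  have sub: "coface d X m g b \<subseteq> (\<lambda>l. \<omega> b l a) ` {..<k}" using k_ordering_transitive[OF a] by blast
  then show ?thesis using surj_card_le[OF _ sub] finite_surj[OF _ sub] by simp
qed simp

lemma k_ordering_orbit_inj:
  assumes a: "a \<in> coface d X m g b" and card: "card (coface d X m g b) = k"
  shows "inj_on (\<lambda>l. \<omega> b l a) {..<k}"
proof -
  have "(\<lambda>l. \<omega> b l a) ` {..<k} = coface d X m g b"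
    using k_ordering_transitive[OF a] k_ordering_in[OF a] by blast
  then show ?thesis using card by (intro eq_card_imp_inj_on) auto
qed

end

section \<open>The arboreal complex\<close>

abbreviation arb_colour :: "(nat \<times> nat) list \<Rightarrow> nat" where
  "arb_colour v \<equiv> fst (hd v)"

definition arb_facet :: "nat \<Rightarrow> (nat \<times> nat) list \<Rightarrow> nat \<Rightarrow> (nat \<times> nat) list set" where
  "arb_facet d q i = {v \<in> arb_simplex d q. arb_colour v \<noteq> i}"

lemma arb_simplex_Cons_facet: "arb_simplex d (x # q) = insert (x # q) (arb_facet d q (fst x))"
  unfolding arb_facet_def by auto

lemma arb_facet_subset: "arb_facet d q i \<subseteq> arb_simplex d q"
  unfolding arb_facet_def by blast

lemma arb_path_Cons:
  "arb_path d k (x # q) \<longleftrightarrow> fst x \<le> d \<and> 1 \<le> snd x \<and> snd x \<le> k - 1 \<and>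
     (q \<noteq> [] \<longrightarrow> fst x \<noteq> arb_colour q) \<and> arb_path d k q"
  by (cases q) auto

lemma arb_path_set: "arb_path d k p \<Longrightarrow> y \<in> set p \<Longrightarrow> fst y \<le> d \<and> 1 \<le> snd y"
  by (induction p) (auto simp: arb_path_Cons)

lemma arb_simplex_memD:
  "v \<in> arb_simplex d p \<Longrightarrow> (\<exists>i\<le>d. v = [(i, 0)]) \<or> (v \<noteq> [] \<and> (\<exists>r. p = r @ v))"
proof (induction p)
  case (Cons x q)
  show ?case
  proof (cases "v = x # q")
    case False
    then have "v \<in> arb_simplex d q" using Cons.prems by auto
    then show ?thesis using Cons.IH by (metis append_Cons)
  qed auto
qed auto

lemma arb_facet_colour_bij:
  assumes "bij_betw arb_colour (arb_simplex d q) {..d}"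
  shows "bij_betw arb_colour (arb_facet d q i) ({..d} - {i})"
proof -
  have "inj_on arb_colour (arb_facet d q i)"
    using bij_betw_imp_inj_on[OF assms] arb_facet_subset by (rule inj_on_subset)
  moreover have "arb_colour ` arb_facet d q i = {..d} - {i}"
    using bij_betw_imp_surj_on[OF assms] unfolding arb_facet_def by auto
  ultimately show ?thesis unfolding bij_betw_def by simp
qed

lemma arb_simplex_colour_bij:
  "arb_path d k p \<Longrightarrow> bij_betw arb_colour (arb_simplex d p) {..d}"
proof (induction p)
  case Nil
  have "arb_simplex d [] = (\<lambda>i. [(i, 0)]) ` {..d}" by auto
  then show ?case by (simp add: bij_betw_def inj_on_def image_image)
next
  case (Cons x q)
  then have IH: "bij_betw arb_colour (arb_simplex d q) {..d}" and x: "fst x \<le> d"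
    using arb_path_Cons by auto
  have "bij_betw arb_colour (arb_facet d q (fst x)) ({..d} - {fst x})"
    using arb_facet_colour_bij[OF IH] .
  moreover have "arb_colour (x # q) \<notin> arb_colour ` arb_facet d q (fst x)"
    unfolding arb_facet_def by auto
  ultimately show ?case
    using x unfolding arb_simplex_Cons_facet bij_betw_def by (auto simp: insert_absorb)
qed

lemma arb_simplex_finite: "arb_path d k p \<Longrightarrow> finite (arb_simplex d p)"
  using bij_betw_finite arb_simplex_colour_bij by blast

lemma arb_simplex_card: "arb_path d k p \<Longrightarrow> card (arb_simplex d p) = d + 1"
  using bij_betw_same_card[OF arb_simplex_colour_bij] by simp

lemma arb_facet_card: "arb_path d k q \<Longrightarrow> i \<le> d \<Longrightarrow> card (arb_facet d q i) = d"
  using bij_betw_same_card[OF arb_facet_colour_bij[OF arb_simplex_colour_bij]] by simp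

lemma arb_simplex_Cons_notin:
  assumes "arb_path d k (x # q)"
  shows "x # q \<notin> arb_simplex d q"
proof
  assume "x # q \<in> arb_simplex d q"
  moreover have "x # q \<noteq> [(i, 0)]" for i using assms by (auto simp: arb_path_Cons)
  moreover have "q \<noteq> r @ x # q" for r using arg_cong[of q "r @ x # q" length] by auto
  ultimately show False using arb_simplex_memD by blast
qed

lemma arboreal_iff: "\<tau> \<in> arboreal d k \<longleftrightarrow> (\<exists>p. arb_path d k p \<and> \<tau> \<subseteq> arb_simplex d p)"
  unfolding arboreal_def by simp

lemma mcells_arboreal_iff: "a \<in> mcells (arboreal d k) arb_m \<longleftrightarrow> fst a \<in> arboreal d k \<and> snd a = 1"
  unfolding mcells_def arb_m_def by (cases a) auto

lemma mcells_arborealE: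
  assumes "a \<in> mcells (arboreal d k) arb_m"
  obtains p where "arb_path d k p" "fst a \<subseteq> arb_simplex d p" "a = (fst a, 1)"
  using assms unfolding mcells_arboreal_iff arboreal_iff by (metis prod.collapse)

lemma arb_simplex_dcell: "arb_path d k p \<Longrightarrow> (arb_simplex d p, 1) \<in> dcells d (arboreal d k) arb_m"
  unfolding dcells_def mcells_arboreal_iff arboreal_iff using arb_simplex_card by fastforce

lemma dcells_arborealE:
  assumes "a \<in> dcells d (arboreal d k) arb_m"
  obtains p where "arb_path d k p" "a = (arb_simplex d p, 1)"
proof -
  have a: "card (fst a) = d + 1" "a \<in> mcells (arboreal d k) arb_m" using assms unfolding dcells_def by auto
  obtain p where p: "arb_path d k p" "fst a \<subseteq> arb_simplex d p" "a = (fst a, 1)"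
    using mcells_arborealE[OF a(2)] by blast
  then have "fst a = arb_simplex d p"
    using card_subset_eq[OF arb_simplex_finite[OF p(1)] p(2)] arb_simplex_card[OF p(1)] a(1) by simp
  then show ?thesis using that p by simp
qed

lemma multicomplex_arboreal: "multicomplex d (arboreal d k) arb_m arb_g"
  unfolding multicomplex_def
proof (intro conjI)
  show "simplicial_complex d (arboreal d k)"
    unfolding simplicial_complex_def
  proof (intro conjI)
    show "{} \<in> arboreal d k" unfolding arboreal_iff by (intro exI[of _ "[]"]) auto
    show "\<forall>\<sigma>\<in>arboreal d k. finite \<sigma> \<and> card \<sigma> \<le> d + 1"
    proof
      fix \<sigma> assume "\<sigma> \<in> arboreal d k"
      then obtain p where p: "arb_path d k p" "\<sigma> \<subseteq> arb_simplex d p" unfolding arboreal_iff by blast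
      then show "finite \<sigma> \<and> card \<sigma> \<le> d + 1"
        using arb_simplex_finite[OF p(1)] arb_simplex_card[OF p(1)] card_mono finite_subset by metis
    qed
    show "\<forall>\<sigma>\<in>arboreal d k. \<forall>\<tau>\<subseteq>\<sigma>. \<tau> \<in> arboreal d k"
    proof (intro ballI allI impI)
      fix \<sigma> \<tau> assume "\<sigma> \<in> arboreal d k" "\<tau> \<subseteq> \<sigma>"
      then show "\<tau> \<in> arboreal d k" unfolding arboreal_iff by (blast intro: subset_trans)
    qed
    show "\<exists>\<sigma>\<in>arboreal d k. card \<sigma> = d + 1"
      using arb_simplex_dcell[of d k "[]"] unfolding dcells_def mcells_arboreal_iff by auto
  qed simp
  show "\<forall>a\<in>mcells (arboreal d k) arb_m. \<forall>\<sigma>. codim1 \<sigma> (fst a) \<longrightarrow>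
      arb_g a \<sigma> \<in> mcells (arboreal d k) arb_m \<and> fst (arb_g a \<sigma>) = \<sigma>"
  proof (intro ballI allI impI)
    fix a \<sigma> assume "a \<in> mcells (arboreal d k) arb_m" "codim1 \<sigma> (fst a)"
    then have "\<sigma> \<in> arboreal d k"
      unfolding mcells_arboreal_iff arboreal_iff codim1_def by (blast intro: subset_trans)
    then show "arb_g a \<sigma> \<in> mcells (arboreal d k) arb_m \<and> fst (arb_g a \<sigma>) = \<sigma>"
      unfolding mcells_arboreal_iff arb_g_def by simp
  qed
qed (auto simp: arb_m_def arb_g_def)

lemma arboreal_contained_simplex:
  assumes p: "arb_path d k p" and sub: "\<tau> \<subseteq> arb_simplex d p"
  shows "((\<tau>, 1), (arb_simplex d p, 1)) \<in> contained (arboreal d k) arb_m arb_g"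
proof -
  have m: "(arb_simplex d p, 1) \<in> mcells (arboreal d k) arb_m"
    using arb_simplex_dcell[OF p] unfolding dcells_def by simp
  moreover have "\<tau> \<subseteq> fst (arb_simplex d p, 1::nat)" using sub by simp
  ultimately obtain e where e: "(e, (arb_simplex d p, 1)) \<in> contained (arboreal d k) arb_m arb_g" "fst e = \<tau>"
    using contained_face_exists[OF multicomplex_arboreal] by blast
  have "e \<in> mcells (arboreal d k) arb_m" using contained_mcell_subset[OF multicomplex_arboreal e(1) m] by simp
  then have "e = (\<tau>, 1)" using e(2) unfolding mcells_arboreal_iff by (simp add: prod_eq_iff)
  then show ?thesis using e(1) by simp
qed

lemma arb_facet_dcell:
  "1 \<le> d \<Longrightarrow> arb_path d k q \<Longrightarrow> i \<le> d \<Longrightarrow> (arb_facet d q i, 1) \<in> dcells (d - 1) (arboreal d k) arb_m"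
  unfolding dcells_def mcells_arboreal_iff arboreal_iff
  using arb_facet_card arb_facet_subset by fastforce

lemma arb_simplex_coface:
  assumes "arb_path d k r" "\<beta> \<subseteq> arb_simplex d r" "card \<beta> = d"
  shows "(arb_simplex d r, 1) \<in> coface d (arboreal d k) arb_m arb_g (\<beta>, 1)"
proof -
  have m: "(arb_simplex d r, 1) \<in> dcells d (arboreal d k) arb_m" using arb_simplex_dcell[OF assms(1)] .
  have "codim1 \<beta> (fst (arb_simplex d r, 1::nat))"
    unfolding codim1_def using assms arb_simplex_card[OF assms(1)] by simp
  moreover have "(arb_simplex d r, 1) \<in> mcells (arboreal d k) arb_m" using m unfolding dcells_def by simp
  ultimately have "(arb_g (arb_simplex d r, 1) \<beta>, (arb_simplex d r, 1)) \<in> contained (arboreal d k) arb_m arb_g"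
    by (rule contained_glue[rotated])
  then show ?thesis unfolding coface_def arb_g_def using m by simp
qed

lemma arb_simplex_coface_facet:
  assumes "arb_path d k q" "i \<le> d"
  shows "(arb_simplex d q, 1) \<in> coface d (arboreal d k) arb_m arb_g (arb_facet d q i, 1)"
  using arb_simplex_coface[OF assms(1) arb_facet_subset arb_facet_card[OF assms]] .

lemma arb_simplex_Cons_coface_facet:
  assumes "arb_path d k (x # q)"
  shows "(arb_simplex d (x # q), 1) \<in> coface d (arboreal d k) arb_m arb_g (arb_facet d q (fst x), 1)"
proof -
  have "arb_path d k q" "fst x \<le> d" using assms arb_path_Cons by auto
  then show ?thesis
    using arb_simplex_coface[OF assms _ arb_facet_card] arb_simplex_Cons_facet by auto
qed

lemma arboreal_ridgeE:
  assumes d_pos: "1 \<le> d" and b: "b \<in> dcells (d - 1) (arboreal d k) arb_m"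
  obtains q i where "arb_path d k q" "i \<le> d" "q \<noteq> [] \<longrightarrow> arb_colour q \<noteq> i"
    "b = (arb_facet d q i, 1)"
proof -
  have b1: "fst b \<in> arboreal d k" "b = (fst b, 1)" "card (fst b) = d"
    using b d_pos unfolding dcells_def mcells_arboreal_iff by (auto simp: prod_eq_iff)
  then obtain p where p: "arb_path d k p" "fst b \<subseteq> arb_simplex d p" unfolding arboreal_iff by blast
  have "codim1 (fst b) (arb_simplex d p)" unfolding codim1_def using p b1 arb_simplex_card[OF p(1)] by simp
  then obtain u where u: "u \<in> arb_simplex d p" "fst b = arb_simplex d p - {u}"
    using codim1_DiffE arb_simplex_finite[OF p(1)] by blast
  have bij: "bij_betw arb_colour (arb_simplex d p) {..d}" using arb_simplex_colour_bij[OF p(1)] .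
  define i where "i = arb_colour u"
  have i: "i \<le> d" using bij_betw_apply[OF bij u(1)] i_def by simp
  have "fst b = arb_facet d p i"
    using u bij_betw_imp_inj_on[OF bij] i_def unfolding arb_facet_def inj_on_def by auto
  then have fb: "b = (arb_facet d p i, 1)" using b1(2) by simp
  show ?thesis
  proof (cases "p = [] \<or> arb_colour p \<noteq> i")
    case True
    then show ?thesis using that[OF p(1) i] fb by blast
  next
    case False
    then obtain y q where pq: "p = y # q" "fst y = i" by (cases p) auto
    have "arb_path d k q" "q \<noteq> [] \<longrightarrow> arb_colour q \<noteq> i" using p(1) pq arb_path_Cons by auto
    moreover have "b = (arb_facet d q i, 1)" using fb pq unfolding arb_facet_def by auto
    ultimately show ?thesis using that[OF _ i] by simp
  qed
qed

definition arb_star :: "nat \<Rightarrow> nat \<Rightarrow> (nat \<times> nat) list \<Rightarrow> nat \<Rightarrow> (nat \<times> nat) list mcell set" where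
  "arb_star d k q i = insert (arb_simplex d q, 1) ((\<lambda>j. (arb_simplex d ((i, j) # q), 1)) ` {1..k-1})"

context
  fixes d k q i
  assumes q: "arb_path d k q" "i \<le> d" "q \<noteq> [] \<longrightarrow> arb_colour q \<noteq> i"
begin

lemma arb_path_extend: "j \<in> {1..k-1} \<Longrightarrow> arb_path d k ((i, j) # q)"
  using q unfolding arb_path_Cons by auto

lemma arb_star_card: "1 \<le> k \<Longrightarrow> card (arb_star d k q i) = k"
proof -
  assume k: "1 \<le> k"
  have new: "(i, j) # q \<in> arb_simplex d ((i, j) # q)" for j by simp
  have old: "(i, j) # q \<notin> arb_simplex d q" if "j \<in> {1..k-1}" for j
    using arb_simplex_Cons_notin[OF arb_path_extend[OF that]] .
  have "inj_on (\<lambda>j. (arb_simplex d ((i, j) # q), 1::nat)) {1..k-1}"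
  proof (rule inj_onI)
    fix j j' assume j: "j \<in> {1..k-1}" "j' \<in> {1..k-1}"
      and "(arb_simplex d ((i, j) # q), 1::nat) = (arb_simplex d ((i, j') # q), 1)"
    then have "(i, j) # q \<in> arb_simplex d ((i, j') # q)" using new[of j] by simp
    then show "j = j'" using old[OF j(1)] by auto
  qed
  moreover have "(arb_simplex d q, 1::nat) \<notin> (\<lambda>j. (arb_simplex d ((i, j) # q), 1)) ` {1..k-1}"
  proof
    assume "(arb_simplex d q, 1::nat) \<in> (\<lambda>j. (arb_simplex d ((i, j) # q), 1)) ` {1..k-1}"
    then obtain j where "j \<in> {1..k-1}" "arb_simplex d q = arb_simplex d ((i, j) # q)" by auto
    then show False using old new by metis
  qed
  ultimately show ?thesis using k unfolding arb_star_def by (simp add: card_image)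
qed

lemma arb_star_subset_coface: "arb_star d k q i \<subseteq> coface d (arboreal d k) arb_m arb_g (arb_facet d q i, 1)"
  using arb_simplex_coface_facet[OF q(1,2)] arb_simplex_Cons_coface_facet[OF arb_path_extend]
  unfolding arb_star_def by auto

text \<open>The k-ordering bounds the number of cofaces by k, so the k evident ones are all of them.\<close>
lemma coface_arb_facet:
  assumes d_pos: "1 \<le> d" and k_pos: "1 \<le> k" and ord: "k_ordering d k (arboreal d k) arb_m arb_g \<Omega>"
  shows "coface d (arboreal d k) arb_m arb_g (arb_facet d q i, 1) = arb_star d k q i"
proof -
  have "finite (coface d (arboreal d k) arb_m arb_g (arb_facet d q i, 1))"
    "card (coface d (arboreal d k) arb_m arb_g (arb_facet d q i, 1)) \<le> k"
    using k_ordering_coface_card[OF ord k_pos arb_facet_dcell[OF d_pos q(1,2)]] by auto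
  then show ?thesis
    using card_seteq[OF _ arb_star_subset_coface] arb_star_card[OF k_pos] by simp
qed

end

lemma arb_simplex_Cons_neighbors:
  assumes p: "arb_path d k (x # q)"
  shows "((arb_simplex d q, 1), (arb_simplex d (x # q), 1)) \<in> neighbors d (arboreal d k) arb_m arb_g"
    and "((arb_simplex d (x # q), 1), (arb_simplex d q, 1)) \<in> neighbors d (arboreal d k) arb_m arb_g"
proof -
  have q: "arb_path d k q" and x: "fst x \<le> d" using p arb_path_Cons by auto
  note c = arb_simplex_coface_facet[OF q x] arb_simplex_Cons_coface_facet[OF p]
  have "card (fst (arb_facet d q (fst x), 1::nat)) = d" using arb_facet_card[OF q x] by simp
  with c show "((arb_simplex d q, 1), (arb_simplex d (x # q), 1)) \<in> neighbors d (arboreal d k) arb_m arb_g"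
    and "((arb_simplex d (x # q), 1), (arb_simplex d q, 1)) \<in> neighbors d (arboreal d k) arb_m arb_g"
    unfolding neighbors_def coface_def by blast+
qed

lemma arb_simplex_connected_root:
  "arb_path d k p \<Longrightarrow>
    ((arb_simplex d [], 1), (arb_simplex d p, 1)) \<in> (neighbors d (arboreal d k) arb_m arb_g)\<^sup>* \<and>
    ((arb_simplex d p, 1), (arb_simplex d [], 1)) \<in> (neighbors d (arboreal d k) arb_m arb_g)\<^sup>*"
proof (induction p)
  case (Cons x q)
  then have "arb_path d k q" using arb_path_Cons by auto
  with Cons.IH show ?case
    using arb_simplex_Cons_neighbors[OF Cons.prems] by (meson rtrancl.simps converse_rtrancl_into_rtrancl)
qed simp

lemma is_object_arboreal:
  assumes k_pos: "1 \<le> k" and col: "coloring d (arboreal d k) \<Gamma>"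
    and ord: "k_ordering d k (arboreal d k) arb_m arb_g \<Omega>"
  shows "is_object d k (arboreal d k) arb_m arb_g \<Gamma> \<Omega> (arb_root d)"
  unfolding is_object_def
proof (intro conjI)
  show "pure d (arboreal d k) arb_m arb_g"
    unfolding pure_def
  proof
    fix a assume "a \<in> mcells (arboreal d k) arb_m"
    then obtain p where p: "arb_path d k p" "fst a \<subseteq> arb_simplex d p" "a = (fst a, 1)"
      by (rule mcells_arborealE)
    then show "\<exists>c\<in>dcells d (arboreal d k) arb_m. (a, c) \<in> contained (arboreal d k) arb_m arb_g"
      using arboreal_contained_simplex[OF p(1,2)] arb_simplex_dcell[OF p(1)] by metis
  qed
  show "lower_path_connected d (arboreal d k) arb_m arb_g"
    unfolding lower_path_connected_def
  proof (intro ballI)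
    fix a b assume "a \<in> dcells d (arboreal d k) arb_m" "b \<in> dcells d (arboreal d k) arb_m"
    then obtain p p' where "arb_path d k p" "a = (arb_simplex d p, 1)" "arb_path d k p'" "b = (arb_simplex d p', 1)"
      by (metis dcells_arborealE)
    then show "(a, b) \<in> (neighbors d (arboreal d k) arb_m arb_g)\<^sup>*"
      using arb_simplex_connected_root by (meson rtrancl_trans)
  qed
  show "\<forall>b\<in>dcells (d - 1) (arboreal d k) arb_m.
      finite (coface d (arboreal d k) arb_m arb_g b) \<and> card (coface d (arboreal d k) arb_m arb_g b) \<le> k"
    using k_ordering_coface_card[OF ord k_pos] by blast
  show "arb_root d \<in> dcells d (arboreal d k) arb_m"
    unfolding arb_root_def using arb_simplex_dcell[of d k "[]"] by simp
qed (use multicomplex_arboreal col ord in blast)+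

section \<open>Universality of the arboreal complex\<close>

text \<open>The path whose last step created the vertex; the initial vertices are born on the empty path.\<close>
definition birth_path :: "(nat \<times> nat) list \<Rightarrow> (nat \<times> nat) list" where
  "birth_path v = (if snd (hd v) = 0 then [] else v)"

lemma arb_simplex_birth_path_suffix:
  assumes "arb_path d k p" "v \<in> arb_simplex d p"
  shows "\<exists>r. p = r @ birth_path v"
  using arb_simplex_memD[OF assms(2)]
proof
  assume "v \<noteq> [] \<and> (\<exists>r. p = r @ v)"
  then obtain r where r: "v \<noteq> []" "p = r @ v" by blast
  then have "snd (hd v) \<noteq> 0" using arb_path_set[OF assms(1), of "hd v"] by fastforce
  then show ?thesis using r unfolding birth_path_def by auto
qed (auto simp: birth_path_def)

lemma birth_path_self: "arb_path d k p \<Longrightarrow> p \<noteq> [] \<Longrightarrow> birth_path p = p"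
  using arb_path_set[of d k p "hd p"] unfolding birth_path_def by fastforce

definition youngest_birth :: "(nat \<times> nat) list set \<Rightarrow> (nat \<times> nat) list" where
  "youngest_birth \<tau> =
     (SOME r. r \<in> insert [] (birth_path ` \<tau>) \<and> (\<forall>v\<in>\<tau>. length (birth_path v) \<le> length r))"

lemma youngest_birth_suffix:
  assumes p: "arb_path d k p" and sub: "\<tau> \<subseteq> arb_simplex d p"
    and ex: "\<exists>r\<in>insert [] (birth_path ` \<tau>). \<forall>v\<in>\<tau>. length (birth_path v) \<le> length r"
  shows "\<exists>r. p = r @ youngest_birth \<tau>" and "\<forall>v\<in>\<tau>. length (birth_path v) \<le> length (youngest_birth \<tau>)"
proof -
  have y: "youngest_birth \<tau> \<in> insert [] (birth_path ` \<tau>)"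
    "\<forall>v\<in>\<tau>. length (birth_path v) \<le> length (youngest_birth \<tau>)"
    using someI_ex[of "\<lambda>r. r \<in> insert [] (birth_path ` \<tau>) \<and> (\<forall>v\<in>\<tau>. length (birth_path v) \<le> length r)"]
      ex unfolding youngest_birth_def by blast+
  then show "\<forall>v\<in>\<tau>. length (birth_path v) \<le> length (youngest_birth \<tau>)" by blast
  show "\<exists>r. p = r @ youngest_birth \<tau>"
    using y(1) arb_simplex_birth_path_suffix[OF p] sub by auto
qed

lemma youngest_birth_initial: "\<tau> \<subseteq> arb_simplex d [] \<Longrightarrow> youngest_birth \<tau> = []"
  using youngest_birth_suffix(1)[of d k "[]" \<tau>] arb_simplex_birth_path_suffix[of d k "[]"] by auto

lemma youngest_birth_newest:
  assumes p: "arb_path d k p" "p \<noteq> []" and sub: "p \<in> \<tau>" "\<tau> \<subseteq> arb_simplex d p"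
  shows "youngest_birth \<tau> = p"
proof -
  have len: "length (birth_path v) \<le> length p" if "v \<in> \<tau>" for v
    using arb_simplex_birth_path_suffix[OF p(1)] sub that by fastforce
  then have "\<exists>r\<in>insert [] (birth_path ` \<tau>). \<forall>v\<in>\<tau>. length (birth_path v) \<le> length r"
    using birth_path_self[OF p] sub(1) by (metis image_eqI insertI2)
  note y = youngest_birth_suffix[OF p(1) sub(2) this]
  have "length p \<le> length (youngest_birth \<tau>)" using y(2) sub(1) birth_path_self[OF p] by metis
  then show ?thesis using y(1) by auto
qed

locale arboreal_universal =
  fixes d k :: nat and \<Gamma> :: "(nat \<times> nat) list \<Rightarrow> nat"
    and \<Omega> :: "(nat \<times> nat) list mcell \<Rightarrow> nat \<Rightarrow> (nat \<times> nat) list mcell \<Rightarrow> (nat \<times> nat) list mcell"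
    and Y :: "'w set set" and m' :: "'w set \<Rightarrow> nat" and g' :: "'w mcell \<Rightarrow> 'w set \<Rightarrow> 'w mcell"
    and \<gamma>' :: "'w \<Rightarrow> nat" and \<omega>' :: "'w mcell \<Rightarrow> nat \<Rightarrow> 'w mcell \<Rightarrow> 'w mcell" and b\<^sub>0 :: "'w mcell"
  assumes d_pos: "1 \<le> d" and k_pos: "1 \<le> k" and colT: "coloring d (arboreal d k) \<Gamma>"
    and ordT: "k_ordering d k (arboreal d k) arb_m arb_g \<Omega>"
    and objY: "is_object d k Y m' g' \<gamma>' \<omega>' b\<^sub>0"
begin

lemma mcY: "multicomplex d Y m' g'"
  using objY unfolding is_object_def by (elim conjE) assumption

lemma colY: "coloring d Y \<gamma>'"
  using objY unfolding is_object_def by (elim conjE) assumption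

lemma ordY: "k_ordering d k Y m' g' \<omega>'"
  using objY unfolding is_object_def by (elim conjE) assumption

lemma b\<^sub>0: "b\<^sub>0 \<in> dcells d Y m'"
  using objY unfolding is_object_def by (elim conjE) assumption

lemma colY_dcell:
  assumes "a \<in> dcells d Y m'"
  shows "\<gamma>' ` fst a = {..d} \<and> inj_on \<gamma>' (fst a)"
proof -
  have "fst a \<in> Y" "card (fst a) = d + 1" using assms unfolding dcells_def mcells_def by auto
  then show ?thesis by (rule coloring_top_cell[OF colY])
qed

lemma colT_simplex:
  assumes "arb_path d k p"
  shows "\<Gamma> ` arb_simplex d p = {..d} \<and> inj_on \<Gamma> (arb_simplex d p)"
proof -
  have "arb_simplex d p \<in> arboreal d k" using assms unfolding arboreal_iff by blast
  then show ?thesis using coloring_top_cell[OF colT _ arb_simplex_card[OF assms]] by simp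
qed

definition step_index :: "(nat \<times> nat) list \<Rightarrow> nat \<times> nat \<Rightarrow> nat" where
  "step_index q x = (SOME l. l < k \<and>
     \<Omega> (arb_facet d q (fst x), 1) l (arb_simplex d q, 1) = (arb_simplex d (x # q), 1))"

lemma step_index:
  assumes "arb_path d k (x # q)"
  shows "step_index q x < k \<and>
    \<Omega> (arb_facet d q (fst x), 1) (step_index q x) (arb_simplex d q, 1) = (arb_simplex d (x # q), 1)"
proof -
  have "arb_path d k q" "fst x \<le> d" using assms arb_path_Cons by auto
  then have "\<exists>l<k. \<Omega> (arb_facet d q (fst x), 1) l (arb_simplex d q, 1) = (arb_simplex d (x # q), 1)"
    using k_ordering_transitive[OF ordT k_pos arb_facet_dcell[OF d_pos]] arb_simplex_coface_facet
      arb_simplex_Cons_coface_facet[OF assms] by blast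
  then show ?thesis unfolding step_index_def by (rule someI_ex[where P = "\<lambda>l. l < k \<and> _ l"])
qed

text \<open>The image of the simplex reached along a path: each step of the path is transported along
  the facet with the same colours, using the same element of the k-ordering.\<close>
primrec simplex_image :: "(nat \<times> nat) list \<Rightarrow> 'w mcell" where
  "simplex_image [] = b\<^sub>0"
| "simplex_image (x # q) =
     \<omega>' (g' (simplex_image q) {w \<in> fst (simplex_image q). \<gamma>' w \<in> \<Gamma> ` arb_facet d q (fst x)})
       (step_index q x) (simplex_image q)"

definition vertex_map :: "(nat \<times> nat) list \<Rightarrow> 'w" where
  "vertex_map v = (THE w. w \<in> fst (simplex_image (birth_path v)) \<and> \<gamma>' w = \<Gamma> v)"

definition maps_simplex :: "(nat \<times> nat) list \<Rightarrow> bool" where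
  "maps_simplex p \<longleftrightarrow> simplex_image p \<in> dcells d Y m' \<and>
     (\<forall>v\<in>arb_simplex d p. vertex_map v \<in> fst (simplex_image p) \<and> \<gamma>' (vertex_map v) = \<Gamma> v)"

lemma vertex_map_newborn:
  assumes p: "arb_path d k p" and F: "simplex_image p \<in> dcells d Y m'"
    and v: "v \<in> arb_simplex d p" and b: "birth_path v = p"
  shows "vertex_map v \<in> fst (simplex_image p) \<and> \<gamma>' (vertex_map v) = \<Gamma> v"
proof -
  have "\<Gamma> v \<in> \<gamma>' ` fst (simplex_image p)" using colT_simplex[OF p] colY_dcell[OF F] v by blast
  then obtain w where w: "w \<in> fst (simplex_image p)" "\<gamma>' w = \<Gamma> v" by (metis imageE)
  have "\<exists>!w. w \<in> fst (simplex_image p) \<and> \<gamma>' w = \<Gamma> v"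
  proof (rule ex1I[of _ w])
    show "w' = w" if "w' \<in> fst (simplex_image p) \<and> \<gamma>' w' = \<Gamma> v" for w'
      using inj_onD[of \<gamma>' "fst (simplex_image p)" w' w] colY_dcell[OF F] w that by auto
  qed (use w in simp)
  then show ?thesis unfolding vertex_map_def b by (rule theI')
qed

context
  fixes p
  assumes p: "arb_path d k p" and mp: "maps_simplex p"
begin

lemma simplex_image_dcell: "simplex_image p \<in> dcells d Y m'"
  using mp unfolding maps_simplex_def by simp

lemma simplex_image_mcell: "simplex_image p \<in> mcells Y m'"
  using simplex_image_dcell unfolding dcells_def by simp

lemma colours_select_vertex_map:
  assumes "\<beta> \<subseteq> arb_simplex d p"
  shows "{w \<in> fst (simplex_image p). \<gamma>' w \<in> \<Gamma> ` \<beta>} = vertex_map ` \<beta>"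
proof
  have inj: "inj_on \<gamma>' (fst (simplex_image p))" using colY_dcell[OF simplex_image_dcell] by blast
  show "{w \<in> fst (simplex_image p). \<gamma>' w \<in> \<Gamma> ` \<beta>} \<subseteq> vertex_map ` \<beta>"
  proof
    fix w assume "w \<in> {w \<in> fst (simplex_image p). \<gamma>' w \<in> \<Gamma> ` \<beta>}"
    then obtain v where w: "w \<in> fst (simplex_image p)" "v \<in> \<beta>" "\<gamma>' w = \<Gamma> v" by blast
    then have "vertex_map v \<in> fst (simplex_image p)" "\<gamma>' (vertex_map v) = \<Gamma> v"
      using mp assms unfolding maps_simplex_def by auto
    then have "w = vertex_map v" using inj_onD[OF inj, of w "vertex_map v"] w by simp
    then show "w \<in> vertex_map ` \<beta>" using w by blast
  qed
  show "vertex_map ` \<beta> \<subseteq> {w \<in> fst (simplex_image p). \<gamma>' w \<in> \<Gamma> ` \<beta>}"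
    using mp assms unfolding maps_simplex_def by auto
qed

lemma vertex_map_inj_on: "inj_on vertex_map (arb_simplex d p)"
proof (rule inj_onI)
  fix v v' assume v: "v \<in> arb_simplex d p" "v' \<in> arb_simplex d p" "vertex_map v = vertex_map v'"
  then have "\<Gamma> v = \<Gamma> v'" using mp unfolding maps_simplex_def by metis
  then show "v = v'" using colT_simplex[OF p] v inj_onD by metis
qed

lemma vertex_map_card: "\<tau> \<subseteq> arb_simplex d p \<Longrightarrow> card (vertex_map ` \<tau>) = card \<tau>"
  using card_image inj_on_subset vertex_map_inj_on by blast

lemma vertex_map_simplex: "vertex_map ` arb_simplex d p = fst (simplex_image p)"
proof -
  have "{w \<in> fst (simplex_image p). \<gamma>' w \<in> \<Gamma> ` arb_simplex d p} = fst (simplex_image p)"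
    using colT_simplex[OF p] colY_dcell[OF simplex_image_dcell] by auto
  then show ?thesis using colours_select_vertex_map by simp
qed

end

lemma glue_facet_image:
  assumes q: "arb_path d k q" and mq: "maps_simplex q" and i: "i \<le> d"
  shows "g' (simplex_image q) (vertex_map ` arb_facet d q i) \<in> dcells (d - 1) Y m'"
    and "fst (g' (simplex_image q) (vertex_map ` arb_facet d q i)) = vertex_map ` arb_facet d q i"
    and "simplex_image q \<in> coface d Y m' g' (g' (simplex_image q) (vertex_map ` arb_facet d q i))"
proof -
  have card: "card (vertex_map ` arb_facet d q i) = d"
    using vertex_map_card[OF q mq arb_facet_subset] arb_facet_card[OF q i] by simp
  have "vertex_map ` arb_facet d q i \<subseteq> fst (simplex_image q)"
    using vertex_map_simplex[OF q mq] arb_facet_subset by blast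
  moreover have "card (fst (simplex_image q)) = d + 1"
    using simplex_image_dcell[OF q mq] unfolding dcells_def by simp
  ultimately have cd: "codim1 (vertex_map ` arb_facet d q i) (fst (simplex_image q))"
    unfolding codim1_def using card by simp
  note glue = multicomplex_glue[OF mcY simplex_image_mcell[OF q mq] cd]
  show "fst (g' (simplex_image q) (vertex_map ` arb_facet d q i)) = vertex_map ` arb_facet d q i"
    using glue by simp
  show "g' (simplex_image q) (vertex_map ` arb_facet d q i) \<in> dcells (d - 1) Y m'"
    unfolding dcells_def using glue card d_pos by simp
  show "simplex_image q \<in> coface d Y m' g' (g' (simplex_image q) (vertex_map ` arb_facet d q i))"
    unfolding coface_def
    using simplex_image_dcell[OF q mq] contained_glue[OF simplex_image_mcell[OF q mq] cd] by simp
qed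

context
  fixes x q
  assumes p: "arb_path d k (x # q)" and mq: "maps_simplex q"
begin

lemma simplex_image_Cons:
  "simplex_image (x # q) =
     \<omega>' (g' (simplex_image q) (vertex_map ` arb_facet d q (fst x))) (step_index q x) (simplex_image q)"
  using colours_select_vertex_map[OF _ mq arb_facet_subset] p arb_path_Cons by simp

lemma simplex_image_Cons_coface:
  "simplex_image (x # q) \<in> coface d Y m' g' (g' (simplex_image q) (vertex_map ` arb_facet d q (fst x)))"
proof -
  have "arb_path d k q" "fst x \<le> d" using p arb_path_Cons by auto
  then show ?thesis
    using k_ordering_in[OF ordY k_pos glue_facet_image(1,3)[OF _ mq]] step_index[OF p] simplex_image_Cons
    by simp
qed

end

lemma arb_path_maps_simplex: "arb_path d k p \<Longrightarrow> maps_simplex p"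
proof (induction p)
  case Nil
  have "vertex_map v \<in> fst (simplex_image []) \<and> \<gamma>' (vertex_map v) = \<Gamma> v" if "v \<in> arb_simplex d []" for v
    using vertex_map_newborn[OF Nil _ that] b\<^sub>0 that unfolding birth_path_def by auto
  then show ?case unfolding maps_simplex_def using b\<^sub>0 by simp
next
  case (Cons x q)
  have q: "arb_path d k q" and x: "1 \<le> snd x" using Cons.prems arb_path_Cons by auto
  have mq: "maps_simplex q" using Cons.IH[OF q] .
  let ?c = "g' (simplex_image q) (vertex_map ` arb_facet d q (fst x))"
  have F: "simplex_image (x # q) \<in> dcells d Y m'" "(?c, simplex_image (x # q)) \<in> contained Y m' g'"
    using simplex_image_Cons_coface[OF Cons.prems mq] unfolding coface_def by auto
  then have "fst ?c \<subseteq> fst (simplex_image (x # q))"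
    using contained_mcell_subset[OF mcY] unfolding dcells_def by blast
  then have sub: "vertex_map ` arb_facet d q (fst x) \<subseteq> fst (simplex_image (x # q))"
    using glue_facet_image(2)[OF q mq] Cons.prems arb_path_Cons by auto
  have "vertex_map v \<in> fst (simplex_image (x # q)) \<and> \<gamma>' (vertex_map v) = \<Gamma> v"
    if v: "v \<in> arb_simplex d (x # q)" for v
  proof (cases "v = x # q")
    case True
    then have "birth_path v = x # q" unfolding birth_path_def using x by simp
    then show ?thesis using vertex_map_newborn[OF Cons.prems F(1) v] by simp
  next
    case False
    then have "v \<in> arb_facet d q (fst x)" using v unfolding arb_simplex_Cons_facet by simp
    then show ?thesis using mq sub arb_facet_subset unfolding maps_simplex_def by blast
  qed
  then show ?case unfolding maps_simplex_def using F(1) by blast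
qed

lemma mface_simplex_image_youngest_birth:
  "arb_path d k p \<Longrightarrow> \<tau> \<subseteq> arb_simplex d p \<Longrightarrow>
     mface Y m' g' (simplex_image p) (vertex_map ` \<tau>) =
     mface Y m' g' (simplex_image (youngest_birth \<tau>)) (vertex_map ` \<tau>)"
proof (induction p)
  case Nil
  then show ?case using youngest_birth_initial by simp
next
  case (Cons x q)
  show ?case
  proof (cases "x # q \<in> \<tau>")
    case True
    then show ?thesis using youngest_birth_newest[OF Cons.prems(1) _ True Cons.prems(2)] by simp
  next
    case False
    have q: "arb_path d k q" and x: "fst x \<le> d" using Cons.prems arb_path_Cons by auto
    have mq: "maps_simplex q" using arb_path_maps_simplex[OF q] .
    let ?c = "g' (simplex_image q) (vertex_map ` arb_facet d q (fst x))"
    have \<tau>: "\<tau> \<subseteq> arb_facet d q (fst x)" using Cons.prems(2) False arb_simplex_Cons_facet by auto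
    have c: "(?c, simplex_image (x # q)) \<in> contained Y m' g'" "simplex_image (x # q) \<in> mcells Y m'"
      "(?c, simplex_image q) \<in> contained Y m' g'" "simplex_image q \<in> mcells Y m'"
      using simplex_image_Cons_coface[OF Cons.prems(1) mq] glue_facet_image(3)[OF q mq x]
      unfolding coface_def dcells_def by blast+
    have "vertex_map ` \<tau> \<subseteq> fst ?c" using glue_facet_image(2)[OF q mq x] \<tau> by auto
    then have "mface Y m' g' (simplex_image (x # q)) (vertex_map ` \<tau>) =
               mface Y m' g' (simplex_image q) (vertex_map ` \<tau>)"
      using mface_contained[OF mcY c(2,1)] mface_contained[OF mcY c(4,3)] by simp
    moreover have "\<tau> \<subseteq> arb_simplex d q" using \<tau> arb_facet_subset by blast
    ultimately show ?thesis using Cons.IH[OF q] by simp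
  qed
qed

text \<open>The multicell over a cell is read off in the image of the simplex containing it that comes
  first along its branch, so that the definition does not depend on a choice of simplex.\<close>
definition morph :: "(nat \<times> nat) list mcell \<Rightarrow> 'w mcell" where
  "morph a = mface Y m' g' (simplex_image (youngest_birth (fst a))) (vertex_map ` fst a)"

context
  fixes p \<tau>
  assumes p: "arb_path d k p" and \<tau>: "\<tau> \<subseteq> arb_simplex d p"
begin

lemma morph_eq: "morph (\<tau>, n) = mface Y m' g' (simplex_image p) (vertex_map ` \<tau>)"
  unfolding morph_def using mface_simplex_image_youngest_birth[OF p \<tau>] by simp

lemma morph_cell:
  "morph (\<tau>, n) \<in> mcells Y m' \<and> fst (morph (\<tau>, n)) = vertex_map ` \<tau> \<and>
     (morph (\<tau>, n), simplex_image p) \<in> contained Y m' g'"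
proof -
  have "vertex_map ` \<tau> \<subseteq> fst (simplex_image p)" using vertex_map_simplex[OF p arb_path_maps_simplex[OF p]] \<tau> by blast
  then show ?thesis using mface[OF mcY simplex_image_mcell[OF p arb_path_maps_simplex[OF p]]] morph_eq by simp
qed

end

lemma morph_simplex: "arb_path d k p \<Longrightarrow> morph (arb_simplex d p, n) = simplex_image p"
  using morph_eq[OF _ subset_refl] mface_eqI[OF mcY simplex_image_mcell[OF _ arb_path_maps_simplex]]
    vertex_map_simplex[OF _ arb_path_maps_simplex] unfolding contained_def by simp

lemma morph_facet:
  assumes q: "arb_path d k q" and i: "i \<le> d"
  shows "morph (arb_facet d q i, 1) = g' (simplex_image q) (vertex_map ` arb_facet d q i)"
proof -
  have "(g' (simplex_image q) (vertex_map ` arb_facet d q i), simplex_image q) \<in> contained Y m' g'"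
    using glue_facet_image(3)[OF q arb_path_maps_simplex[OF q] i] unfolding coface_def by simp
  then show ?thesis
    using morph_eq[OF q arb_facet_subset] glue_facet_image(2)[OF q arb_path_maps_simplex[OF q] i]
      mface_eqI[OF mcY simplex_image_mcell[OF q arb_path_maps_simplex[OF q]]] by simp
qed

lemma vertex_map_colour:
  assumes "arb_path d k p" "v \<in> arb_simplex d p"
  shows "\<gamma>' (vertex_map v) = \<Gamma> v"
  using arb_path_maps_simplex[OF assms(1)] assms(2) unfolding maps_simplex_def by blast

text \<open>The ridge has exactly k cofaces, so the orbit of the base simplex under the k-ordering is
  injective and the index l is recovered from the simplex it produces.\<close>
lemma morph_orbit:
  assumes q: "arb_path d k q" "i \<le> d" "q \<noteq> [] \<longrightarrow> arb_colour q \<noteq> i" and l: "l < k"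
  shows "morph (\<Omega> (arb_facet d q i, 1) l (arb_simplex d q, 1)) =
    \<omega>' (morph (arb_facet d q i, 1)) l (simplex_image q)"
proof -
  let ?b = "(arb_facet d q i, 1)" and ?S = "(arb_simplex d q, 1)"
  have bT: "?b \<in> dcells (d - 1) (arboreal d k) arb_m" using arb_facet_dcell[OF d_pos q(1,2)] .
  have S: "?S \<in> coface d (arboreal d k) arb_m arb_g ?b" using arb_simplex_coface_facet[OF q(1,2)] .
  have star: "coface d (arboreal d k) arb_m arb_g ?b = arb_star d k q i"
    using coface_arb_facet[OF q d_pos k_pos ordT] .
  have inj: "inj_on (\<lambda>l. \<Omega> ?b l ?S) {..<k}"
    using k_ordering_orbit_inj[OF ordT k_pos bT S] star arb_star_card[OF q k_pos] by simp
  have Y: "morph ?b \<in> dcells (d - 1) Y m'" "simplex_image q \<in> coface d Y m' g' (morph ?b)"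
    using glue_facet_image(1,3)[OF q(1) arb_path_maps_simplex[OF q(1)] q(2)] morph_facet[OF q(1,2)] by simp_all
  have "\<Omega> ?b l ?S \<in> arb_star d k q i" using k_ordering_in[OF ordT k_pos bT S l] star by simp
  then consider "\<Omega> ?b l ?S = ?S"
    | j where "j \<in> {1..k-1}" "\<Omega> ?b l ?S = (arb_simplex d ((i, j) # q), 1)"
    unfolding arb_star_def by blast
  then show ?thesis
  proof cases
    case 1
    then have "\<Omega> ?b 0 ?S = \<Omega> ?b l ?S" using k_ordering_zero[OF ordT k_pos bT S] by simp
    then have "l = 0" using inj_onD[OF inj] l k_pos by simp
    then show ?thesis using 1 morph_simplex[OF q(1)] k_ordering_zero[OF ordY k_pos Y] by simp
  next
    case (2 j)
    have pj: "arb_path d k ((i, j) # q)" using arb_path_extend[OF q 2(1)] .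
    have "step_index q (i, j) < k" "\<Omega> ?b (step_index q (i, j)) ?S = \<Omega> ?b l ?S"
      using step_index[OF pj] 2(2) by simp_all
    then have "step_index q (i, j) = l" using inj_onD[OF inj] l by simp
    then show ?thesis
      using 2(2) morph_simplex[OF pj] simplex_image_Cons[OF pj arb_path_maps_simplex[OF q(1)]] morph_facet[OF q(1,2)]
      by simp
  qed
qed

lemma morph_ordering:
  assumes b: "b \<in> dcells (d - 1) (arboreal d k) arb_m" and a: "a \<in> coface d (arboreal d k) arb_m arb_g b"
    and l: "l < k"
  shows "morph (\<Omega> b l a) = \<omega>' (morph b) l (morph a)"
proof -
  obtain q i where q: "arb_path d k q" "i \<le> d" "q \<noteq> [] \<longrightarrow> arb_colour q \<noteq> i"
    and bq: "b = (arb_facet d q i, 1)" using arboreal_ridgeE[OF d_pos b] by blast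
  have S: "(arb_simplex d q, 1) \<in> coface d (arboreal d k) arb_m arb_g b"
    using arb_simplex_coface_facet[OF q(1,2)] bq by simp
  obtain l' where l': "l' < k" "\<Omega> b l' (arb_simplex d q, 1) = a"
    using k_ordering_transitive[OF ordT k_pos b S a] by blast
  have Y: "morph b \<in> dcells (d - 1) Y m'" "simplex_image q \<in> coface d Y m' g' (morph b)"
    using glue_facet_image(1,3)[OF q(1) arb_path_maps_simplex[OF q(1)] q(2)] morph_facet[OF q(1,2)] bq by simp_all
  have "morph (\<Omega> b l a) = morph (\<Omega> b ((l + l') mod k) (arb_simplex d q, 1))"
    using k_ordering_add[OF ordT k_pos b S l l'(1)] l'(2) by simp
  also have "\<dots> = \<omega>' (morph b) ((l + l') mod k) (simplex_image q)"
    using morph_orbit[OF q] k_pos bq by simp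
  also have "\<dots> = \<omega>' (morph b) l (\<omega>' (morph b) l' (simplex_image q))"
    using k_ordering_add[OF ordY k_pos Y l l'(1)] .
  also have "\<dots> = \<omega>' (morph b) l (morph a)"
    using morph_orbit[OF q l'(1)] l'(2) bq by simp
  finally show ?thesis .
qed

lemma morph_glue:
  assumes a: "a \<in> mcells (arboreal d k) arb_m" and \<sigma>: "codim1 \<sigma> (fst a)"
  shows "morph (arb_g a \<sigma>) = g' (morph a) (vertex_map ` \<sigma>)"
proof -
  obtain p where p: "arb_path d k p" "fst a \<subseteq> arb_simplex d p" "a = (fst a, 1)"
    using mcells_arborealE[OF a] by blast
  have ss: "\<sigma> \<subseteq> arb_simplex d p" using \<sigma> p(2) unfolding codim1_def by blast
  have Fa: "morph a \<in> mcells Y m'" "fst (morph a) = vertex_map ` fst a"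
    "(morph a, simplex_image p) \<in> contained Y m' g'"
    using morph_cell[OF p(1,2), of 1, folded p(3)] by auto
  have "codim1 (vertex_map ` \<sigma>) (fst (morph a))"
    using \<sigma> vertex_map_card[OF p(1) arb_path_maps_simplex[OF p(1)] ss] Fa(2)
      vertex_map_card[OF p(1) arb_path_maps_simplex[OF p(1)] p(2)] unfolding codim1_def by auto
  note glue = multicomplex_glue[OF mcY Fa(1) this] contained_glue[OF Fa(1) this]
  have "mface Y m' g' (simplex_image p) (vertex_map ` \<sigma>) = g' (morph a) (vertex_map ` \<sigma>)"
    using mface_eqI[OF mcY simplex_image_mcell[OF p(1) arb_path_maps_simplex[OF p(1)]]
        contained_trans[OF glue(2) Fa(3)]] glue(1) by simp
  then show ?thesis using morph_eq[OF p(1) ss] unfolding arb_g_def by simp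
qed

lemma is_morphism_morph:
  "is_morphism d k (arboreal d k) arb_m arb_g \<Gamma> \<Omega> (arb_root d) Y m' g' \<gamma>' \<omega>' b\<^sub>0 morph"
  unfolding is_morphism_def
proof (intro conjI exI[of _ vertex_map])
  show "\<forall>\<sigma>\<in>arboreal d k. vertex_map ` \<sigma> \<in> Y"
  proof
    fix \<sigma> assume "\<sigma> \<in> arboreal d k"
    then obtain p where p: "arb_path d k p" "\<sigma> \<subseteq> arb_simplex d p" unfolding arboreal_iff by blast
    have "fst (simplex_image p) \<in> Y"
      using simplex_image_mcell[OF p(1) arb_path_maps_simplex[OF p(1)]] unfolding mcells_def by auto
    moreover have "vertex_map ` \<sigma> \<subseteq> fst (simplex_image p)"
      using vertex_map_simplex[OF p(1) arb_path_maps_simplex[OF p(1)]] p(2) by blast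
    ultimately show "vertex_map ` \<sigma> \<in> Y" by (rule multicomplex_subset_closed[OF mcY])
  qed
  show "\<forall>a\<in>mcells (arboreal d k) arb_m. morph a \<in> mcells Y m' \<and> fst (morph a) = vertex_map ` fst a \<and>
      card (fst (morph a)) = card (fst a)"
    and "\<forall>a\<in>mcells (arboreal d k) arb_m. \<gamma>' ` fst (morph a) = \<Gamma> ` fst a"
  proof (rule_tac [!] ballI)
    fix a assume "a \<in> mcells (arboreal d k) arb_m"
    then obtain p where p: "arb_path d k p" "fst a \<subseteq> arb_simplex d p" "a = (fst a, 1)"
      using mcells_arborealE by blast
    note cell = morph_cell[OF p(1,2), of 1, folded p(3)]
    show "morph a \<in> mcells Y m' \<and> fst (morph a) = vertex_map ` fst a \<and> card (fst (morph a)) = card (fst a)"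
      using cell vertex_map_card[OF p(1) arb_path_maps_simplex[OF p(1)] p(2)] by simp
    have "\<gamma>' ` fst (morph a) = (\<lambda>v. \<gamma>' (vertex_map v)) ` fst a" using cell by (simp add: image_image)
    also have "\<dots> = \<Gamma> ` fst a" using vertex_map_colour[OF p(1)] p(2) by (intro image_cong) auto
    finally show "\<gamma>' ` fst (morph a) = \<Gamma> ` fst a" .
  qed
  show "morph (arb_root d) = b\<^sub>0" unfolding arb_root_def using morph_simplex[of "[]"] by simp
qed (use morph_glue morph_ordering in blast)+

context
  fixes F
  assumes F: "is_morphism d k (arboreal d k) arb_m arb_g \<Gamma> \<Omega> (arb_root d) Y m' g' \<gamma>' \<omega>' b\<^sub>0 F"
begin

text \<open>The image of a face lies below the image of the simplex, where it is determined by its colours.\<close>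
lemma morphism_agrees_on_faces:
  assumes p: "arb_path d k p" and Fp: "F (arb_simplex d p, 1) = simplex_image p"
    and \<tau>: "\<tau> \<subseteq> arb_simplex d p"
  shows "F (\<tau>, 1) = morph (\<tau>, 1)"
proof -
  have mp: "maps_simplex p" using arb_path_maps_simplex[OF p] .
  have "((\<tau>, 1), (arb_simplex d p, 1)) \<in> contained (arboreal d k) arb_m arb_g"
    using arboreal_contained_simplex[OF p \<tau>] .
  then have "(F (\<tau>, 1), F (arb_simplex d p, 1)) \<in> contained Y m' g'"
    by (rule is_morphism_contained[OF multicomplex_arboreal F])
  then have c: "(F (\<tau>, 1), simplex_image p) \<in> contained Y m' g'" unfolding Fp .
  have sub: "fst (F (\<tau>, 1)) \<subseteq> fst (simplex_image p)"
    using contained_mcell_subset[OF mcY c simplex_image_mcell[OF p mp]] by simp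
  have "(\<tau>, 1) \<in> mcells (arboreal d k) arb_m" unfolding mcells_arboreal_iff arboreal_iff using p \<tau> by auto
  then have col: "\<gamma>' ` fst (F (\<tau>, 1)) = \<Gamma> ` \<tau>" using is_morphism_colour[OF F] by simp
  have inj: "inj_on \<gamma>' (fst (simplex_image p))" using colY_dcell[OF simplex_image_dcell[OF p mp]] by simp
  have "fst (F (\<tau>, 1)) = {w \<in> fst (simplex_image p). \<gamma>' w \<in> \<Gamma> ` \<tau>}"
    using sub inj_on_image_mem_iff[OF inj] unfolding col[symmetric] by blast
  then have "fst (F (\<tau>, 1)) = vertex_map ` \<tau>" using colours_select_vertex_map[OF p mp \<tau>] by simp
  then show ?thesis
    using mface_eqI[OF mcY simplex_image_mcell[OF p mp] c] morph_eq[OF p \<tau>] by simp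
qed

lemma morphism_on_simplices: "arb_path d k p \<Longrightarrow> F (arb_simplex d p, 1) = simplex_image p"
proof (induction p)
  case Nil
  then show ?case using is_morphism_root[OF F] unfolding arb_root_def by simp
next
  case (Cons x q)
  have q: "arb_path d k q" and x: "fst x \<le> d" using Cons.prems arb_path_Cons by auto
  let ?b = "(arb_facet d q (fst x), 1)"
  have Fb: "F ?b = g' (simplex_image q) (vertex_map ` arb_facet d q (fst x))"
    using morphism_agrees_on_faces[OF q Cons.IH[OF q] arb_facet_subset] morph_facet[OF q x] by simp
  note step = step_index[OF Cons.prems]
  have "F (arb_simplex d (x # q), 1) = F (\<Omega> ?b (step_index q x) (arb_simplex d q, 1))"
    using step[THEN conjunct2] by (simp only:)
  also have "\<dots> = \<omega>' (F ?b) (step_index q x) (F (arb_simplex d q, 1))"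
    using is_morphism_ordering[OF F arb_facet_dcell[OF d_pos q x] arb_simplex_coface_facet[OF q x]]
      step[THEN conjunct1] .
  also have "\<dots> = simplex_image (x # q)"
    using Fb Cons.IH[OF q] simplex_image_Cons[OF Cons.prems arb_path_maps_simplex[OF q]] by simp
  finally show ?case .
qed

lemma morphism_unique: "a \<in> mcells (arboreal d k) arb_m \<Longrightarrow> F a = morph a"
  using morphism_agrees_on_faces[OF _ morphism_on_simplices] by (metis mcells_arborealE)

end

end

theorem proposition5:
  fixes d k :: nat
    and \<Gamma> :: "(nat \<times> nat) list \<Rightarrow> nat"
    and \<Omega> :: "(nat \<times> nat) list mcell \<Rightarrow> nat \<Rightarrow> (nat \<times> nat) list mcell \<Rightarrow> (nat \<times> nat) list mcell"
  assumes "1 \<le> d" and "1 \<le> k"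
    and "coloring d (arboreal d k) \<Gamma>"
    and "k_ordering d k (arboreal d k) arb_m arb_g \<Omega>"
  shows "is_object d k (arboreal d k) arb_m arb_g \<Gamma> \<Omega> (arb_root d) \<and>
    (\<forall>(Y :: 'w set set) m' g' \<gamma>' \<omega>' b0.
       is_object d k Y m' g' \<gamma>' \<omega>' b0 \<longrightarrow>
       (\<exists>F. is_morphism d k (arboreal d k) arb_m arb_g \<Gamma> \<Omega> (arb_root d) Y m' g' \<gamma>' \<omega>' b0 F \<and>
            (\<forall>F'. is_morphism d k (arboreal d k) arb_m arb_g \<Gamma> \<Omega> (arb_root d) Y m' g' \<gamma>' \<omega>' b0 F'
                  \<longrightarrow> (\<forall>a\<in>mcells (arboreal d k) arb_m. F' a = F a))))"
proof (intro conjI allI impI)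
  show "is_object d k (arboreal d k) arb_m arb_g \<Gamma> \<Omega> (arb_root d)"
    using is_object_arboreal[OF assms(2-4)] .
  fix Y :: "'w set set" and m' g' \<gamma>' \<omega>' b0
  assume "is_object d k Y m' g' \<gamma>' \<omega>' b0"
  then interpret arboreal_universal d k \<Gamma> \<Omega> Y m' g' \<gamma>' \<omega>' b0
    using assms by unfold_locales
  show "\<exists>F. is_morphism d k (arboreal d k) arb_m arb_g \<Gamma> \<Omega> (arb_root d) Y m' g' \<gamma>' \<omega>' b0 F \<and>
      (\<forall>F'. is_morphism d k (arboreal d k) arb_m arb_g \<Gamma> \<Omega> (arb_root d) Y m' g' \<gamma>' \<omega>' b0 F'
            \<longrightarrow> (\<forall>a\<in>mcells (arboreal d k) arb_m. F' a = F a))"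
    using is_morphism_morph morphism_unique by blast
qed

end
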